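(* Let $n\geq 3$ and let $|\cdot|$ be any homogeneous quasi-norm on $\mathbb{R}^n$ (with respect to the standard dilations $x\mapsto\lambda x$). Then for every $f\in C_0^\infty(\mathbb{R}^n\setminus\{0\})$ and every $\alpha\in\mathbb{R}$, $$\frac{|n-2-2\alpha|}{2}\left\|\frac{f}{|x|^{\alpha+1}}\right\|_{L^{2}(\mathbb{R}^{n})}\leq\left\|\frac{1}{|x|^{\alpha}}\frac{df}{d|x|}\right\|_{L^{2}(\mathbb{R}^{n})},$$ and for $\alpha\neq\frac{n-2}{2}$ the constant $\frac{|n-2-2\alpha|}{2}$ is optimal.
   Context: A homogeneous quasi-norm on $\mathbb{R}^n$ (with standard dilations) is a continuous function $x\mapsto|x|\in[0,\infty)$ with $|-x|=|x|$, $|\lambda x|=\lambda|x|$ for all $\lambda>0$, and $|x|=0$ iff $x=0$. For $x\neq0$, $\frac{df}{d|x|}(x)=\frac{d}{dr}\big[f(r y)\big]\big|_{r=|x|}$ where $y=x/|x|$ (scalar division), i.e. the derivative along the ray through $x$ with respect to the quasi-norm parameter $r=|x|$. $L^2$ norms are with respect to Lebesgue measure. *)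

theory Defs
  imports "HOL-Analysis.Analysis"
begin

definition homogeneous_quasi_norm :: "('a::euclidean_space \<Rightarrow> real) \<Rightarrow> bool" where
  "homogeneous_quasi_norm q \<longleftrightarrow>
     continuous_on UNIV q \<and>
     (\<forall>x. q x \<ge> 0) \<and>
     (\<forall>x. q (- x) = q x) \<and>
     (\<forall>x. \<forall>l>0. q (l *\<^sub>R x) = l * q x) \<and>
     (\<forall>x. q x = 0 \<longleftrightarrow> x = 0)"

coinductive smooth_fun :: "('a::real_normed_vector \<Rightarrow> real) \<Rightarrow> bool" where
  "(\<forall>x. f differentiable (at x)) \<Longrightarrow>
   (\<forall>v. smooth_fun (\<lambda>x. frechet_derivative f (at x) v)) \<Longrightarrow> smooth_fun f"

definition Cc_infty_punctured :: "('a::euclidean_space \<Rightarrow> real) set" where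
  "Cc_infty_punctured = {f. smooth_fun f \<and> compact (closure {x. f x \<noteq> 0})
                              \<and> 0 \<notin> closure {x. f x \<noteq> 0}}"

definition radial_deriv :: "('a::euclidean_space \<Rightarrow> real) \<Rightarrow> ('a \<Rightarrow> real) \<Rightarrow> 'a \<Rightarrow> real" where
  "radial_deriv q f x = deriv (\<lambda>r. f (r *\<^sub>R (x /\<^sub>R q x))) (q x)"

definition L2norm :: "('a::euclidean_space \<Rightarrow> real) \<Rightarrow> real" where
  "L2norm g = sqrt (integral\<^sup>L lborel (\<lambda>x. (g x)\<^sup>2))"

end

theory Submission
  imports Defs
begin

text \<open>Write \<open>E f x = f'(x) x\<close> for the Euler derivative, so that the radial derivative is \<open>E f / q\<close>,
  and \<open>W = q powr (-(2\<alpha> + 2))\<close>. Differentiating \<open>\<integral> f(tx)\<^sup>2 W(tx) dx = t\<^sup>-\<^sup>n \<integral> f\<^sup>2 W dx\<close> at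
  \<open>t = 1\<close> yields \<open>2 \<integral> f E f W = (2\<alpha> + 2 - n) \<integral> f\<^sup>2 W\<close>, and Cauchy-Schwarz turns this identity
  into the inequality. For optimality, test with \<open>norm x powr (-\<beta>) \<phi>(ln (norm x) / k)\<close>, where
  \<open>\<beta> = (n - 2 - 2\<alpha>) / 2\<close> and \<open>\<phi>\<close> is a fixed bump: the weight \<open>norm x powr (-2\<beta>) W\<close> is
  homogeneous of degree \<open>-n\<close>, so both sides become integrals of profiles in \<open>ln (norm x)\<close> that are
  invariant under translation, and the cut-off changes the ratio of the two norms only by \<open>O(1/k)\<close>.\<close>

section \<open>Integrals over euclidean spaces\<close>

lemma lborel_integral_scaleR:
  fixes g :: "'a::euclidean_space \<Rightarrow> real" and c :: real
  assumes c: "c > 0" and g: "integrable lborel g"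
  shows "integrable lborel (\<lambda>x. g (c *\<^sub>R x))"
    and "(\<integral>x. g (c *\<^sub>R x) \<partial>lborel) = (\<integral>x. g x \<partial>lborel) / c ^ DIM('a)"
proof -
  have L: "lborel = density (distr lborel borel (\<lambda>x::'a. 0 + c *\<^sub>R x)) (\<lambda>_. \<bar>c\<bar>^DIM('a))"
    using lborel_affine[of c "0::'a"] c by simp
  have [measurable]: "g \<in> borel_measurable borel" using g by auto
  have "integrable (distr lborel borel (\<lambda>x. c *\<^sub>R x)) (\<lambda>x. \<bar>c\<bar>^DIM('a) *\<^sub>R g x)"
    using g by (subst (asm) L, subst (asm) integrable_density) auto
  then have "integrable lborel (\<lambda>x. \<bar>c\<bar>^DIM('a) *\<^sub>R g (c *\<^sub>R x))"
    by (subst (asm) integrable_distr_eq) auto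
  then show "integrable lborel (\<lambda>x. g (c *\<^sub>R x))"
    using c by simp
  have "(\<integral>x. g x \<partial>lborel) = (\<integral>x. \<bar>c\<bar>^DIM('a) *\<^sub>R g x \<partial>(distr lborel borel (\<lambda>x. c *\<^sub>R x)))"
    by (subst L, subst integral_density) auto
  also have "\<dots> = c^DIM('a) * (\<integral>x. g (c *\<^sub>R x) \<partial>lborel)"
    using c by (subst integral_distr) auto
  finally show "(\<integral>x. g (c *\<^sub>R x) \<partial>lborel) = (\<integral>x. g x \<partial>lborel) / c ^ DIM('a)"
    using c by (simp add: field_simps)
qed

lemma integrable_continuous_bounded_support:
  fixes h :: "'a::euclidean_space \<Rightarrow> real"
  assumes "continuous_on UNIV h" "\<And>x. norm x > R \<Longrightarrow> h x = 0"
  shows "integrable lborel h"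
proof -
  have "integrable lborel (\<lambda>x. indicator (cball 0 R) x *\<^sub>R h x)"
    by (rule borel_integrable_compact) (auto intro: continuous_on_subset[OF assms(1)])
  also have "(\<lambda>x. indicator (cball 0 R) x *\<^sub>R h x) = h"
    using assms(2) by (auto simp: indicator_def fun_eq_iff not_le)
  finally show ?thesis .
qed

lemma integral_eq_lborel_integral_of_support:
  fixes h :: "'a::euclidean_space \<Rightarrow> real"
  assumes "integrable lborel h" "\<And>x. x \<notin> S \<Longrightarrow> h x = 0"
  shows "integral S h = (\<integral>x. h x \<partial>lborel)"
proof -
  have "(\<lambda>x. if x \<in> S then h x else 0) = h"
    using assms(2) by auto
  then have "((\<lambda>x. if x \<in> S then h x else 0) has_integral (\<integral>x. h x \<partial>lborel)) UNIV"
    using has_integral_integral_lborel[OF assms(1)] by simp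
  then show ?thesis
    by (simp only: has_integral_restrict_UNIV integral_unique)
qed

lemma continuous_on_vanishing_near_0:
  fixes \<phi> :: "'a::real_normed_vector \<Rightarrow> real"
  assumes "\<And>x. x \<noteq> 0 \<Longrightarrow> isCont \<phi> x" "r > 0" "\<And>x. norm x < r \<Longrightarrow> \<phi> x = 0"
  shows "continuous_on UNIV \<phi>"
proof -
  have "isCont \<phi> 0"
    unfolding isCont_def using assms(2,3) assms(3)[of 0]
    by (intro tendsto_eventually) (auto simp: eventually_at dist_norm intro!: exI[of _ r])
  then show ?thesis using assms(1) by (metis continuous_at_imp_continuous_on)
qed

lemma integral_pos_continuous:
  fixes g :: "'a::euclidean_space \<Rightarrow> real"
  assumes c: "continuous_on UNIV g" and nn: "\<And>x. g x \<ge> 0" and int: "integrable lborel g"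
    and x0: "g x0 > 0"
  shows "(\<integral>x. g x \<partial>lborel) > 0"
proof -
  have "isCont g x0" using c by (simp add: continuous_on_eq_continuous_at)
  then obtain e where e: "e > 0" "\<And>y. dist y x0 < e \<Longrightarrow> dist (g y) (g x0) < g x0 / 2"
    using x0 unfolding continuous_at_eps_delta by (metis half_gt_zero)
  have ge: "indicator (ball x0 e) y * (g x0 / 2) \<le> g y" for y
  proof (cases "y \<in> ball x0 e")
    case True
    then have "\<bar>g y - g x0\<bar> < g x0 / 2"
      using e(2)[of y] by (simp add: dist_commute dist_real_def abs_minus_commute)
    then have "g y > g x0 / 2" unfolding abs_less_iff by linarith
    then show ?thesis using True by simp
  qed (use nn in auto)
  have "integrable lborel (\<lambda>y. indicator (ball x0 e) y * (g x0 / 2))"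
    by (intro integrable_mult_left integrable_real_indicator)
      (use emeasure_lborel_ball_finite[of x0 e] in \<open>auto simp: top_unique\<close>)
  then have "measure lborel (ball x0 e) * (g x0 / 2) \<le> (\<integral>x. g x \<partial>lborel)"
    using integral_mono[OF _ int ge] by simp
  moreover have "measure lborel (ball x0 e) > 0" using content_ball_pos[OF e(1)] by simp
  ultimately show ?thesis using x0 by (smt (verit) mult_pos_pos half_gt_zero)
qed

lemma weighted_integral_Cauchy_Schwarz:
  fixes a b w :: "'a::euclidean_space \<Rightarrow> real"
  assumes "integrable lborel (\<lambda>x. a x ^ 2 * w x)" "integrable lborel (\<lambda>x. b x ^ 2 * w x)"
    "integrable lborel (\<lambda>x. a x * b x * w x)" "\<And>x. w x \<ge> 0"
  shows "(\<integral>x. a x * b x * w x \<partial>lborel)^2 \<le> (\<integral>x. a x ^ 2 * w x \<partial>lborel) * (\<integral>x. b x ^ 2 * w x \<partial>lborel)"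
proof -
  define A where "A = (\<integral>x. a x ^ 2 * w x \<partial>lborel)"
  define B where "B = (\<integral>x. b x ^ 2 * w x \<partial>lborel)"
  define M where "M = (\<integral>x. a x * b x * w x \<partial>lborel)"
  have quadratic_nonneg: "0 \<le> t^2 * A - 2 * t * M + B" for t
  proof -
    have "0 \<le> (\<integral>x. (t * a x - b x)^2 * w x \<partial>lborel)"
      using assms(4) by (intro integral_nonneg_AE) auto
    also have "(\<lambda>x. (t * a x - b x)^2 * w x)
        = (\<lambda>x. t^2 * (a x ^ 2 * w x) - (2 * t) * (a x * b x * w x) + b x ^ 2 * w x)"
      by (auto simp: fun_eq_iff power2_eq_square algebra_simps)
    also have "(\<integral>x. t^2 * (a x ^ 2 * w x) - (2 * t) * (a x * b x * w x) + b x ^ 2 * w x \<partial>lborel)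
        = t^2 * A - 2 * t * M + B"
      using assms(1-3) by (simp add: A_def B_def M_def)
    finally show ?thesis .
  qed
  have "A \<ge> 0" unfolding A_def using assms(4) by (intro integral_nonneg_AE) auto
  then consider "A = 0" | "A > 0" by linarith
  then have "M^2 \<le> A * B"
  proof cases
    case 1
    have "M = 0"
    proof (rule ccontr)
      assume "M \<noteq> 0"
      then have "2 * ((B + 1) / (2 * M)) * M = B + 1" by (simp add: field_simps)
      then show False using quadratic_nonneg[of "(B + 1) / (2 * M)"] 1 by simp
    qed
    then show ?thesis using 1 by simp
  next
    case 2
    have "0 \<le> (M/A)^2 * A - 2 * (M/A) * M + B" by (rule quadratic_nonneg)
    also have "\<dots> = B - M^2 / A" using 2 by (simp add: field_simps power2_eq_square)
    finally show ?thesis using 2 by (simp add: field_simps)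
  qed
  then show ?thesis by (simp add: A_def B_def M_def)
qed

lemma weighted_L2_triangle:
  fixes a b w :: "'a::euclidean_space \<Rightarrow> real"
  assumes "integrable lborel (\<lambda>x. a x ^ 2 * w x)" "integrable lborel (\<lambda>x. b x ^ 2 * w x)"
    "integrable lborel (\<lambda>x. a x * b x * w x)" "\<And>x. w x \<ge> 0"
  shows "sqrt (\<integral>x. (a x + b x)^2 * w x \<partial>lborel)
           \<le> sqrt (\<integral>x. a x ^ 2 * w x \<partial>lborel) + sqrt (\<integral>x. b x ^ 2 * w x \<partial>lborel)"
proof -
  define A where "A = (\<integral>x. a x ^ 2 * w x \<partial>lborel)"
  define B where "B = (\<integral>x. b x ^ 2 * w x \<partial>lborel)"
  define M where "M = (\<integral>x. a x * b x * w x \<partial>lborel)"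
  have A: "A \<ge> 0" and B: "B \<ge> 0"
    unfolding A_def B_def using assms(4) by (auto intro!: integral_nonneg_AE)
  have "M^2 \<le> A * B"
    using weighted_integral_Cauchy_Schwarz[OF assms] by (simp add: A_def B_def M_def)
  then have "\<bar>M\<bar> \<le> sqrt (A * B)"
    using real_sqrt_le_mono by fastforce
  then have "M \<le> sqrt A * sqrt B" by (simp add: real_sqrt_mult)
  moreover have "(\<lambda>x. (a x + b x)^2 * w x) = (\<lambda>x. a x ^ 2 * w x + 2 * (a x * b x * w x) + b x ^ 2 * w x)"
    by (auto simp: fun_eq_iff power2_eq_square algebra_simps)
  then have "(\<integral>x. (a x + b x)^2 * w x \<partial>lborel) = A + 2 * M + B"
    using assms(1-3) by (simp add: A_def B_def M_def)
  ultimately have "(\<integral>x. (a x + b x)^2 * w x \<partial>lborel) \<le> (sqrt A + sqrt B)^2"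
    using A B by (simp add: power2_eq_square algebra_simps)
  then have "sqrt (\<integral>x. (a x + b x)^2 * w x \<partial>lborel) \<le> \<bar>sqrt A + sqrt B\<bar>"
    using real_sqrt_le_mono by fastforce
  then show ?thesis
    using A B by (simp add: A_def B_def)
qed

lemma norm_scaleR_gt_outside_cube:
  fixes x :: "'a::euclidean_space"
  assumes t: "t > 1/2"
    and x: "x \<notin> cbox (- ((2 * \<bar>R\<bar> + 1) *\<^sub>R (\<Sum>Basis::'a))) ((2 * \<bar>R\<bar> + 1) *\<^sub>R \<Sum>Basis)"
  shows "norm (t *\<^sub>R x) > R"
proof -
  from x obtain b where b: "b \<in> Basis" "\<bar>x \<bullet> b\<bar> > 2 * \<bar>R\<bar> + 1"
    by (auto simp: mem_box inner_sum_left inner_Basis sum.delta abs_le_iff not_le)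
  then have "norm x > 2 * \<bar>R\<bar> + 1" using Basis_le_norm[of b x] by simp
  then have "(1/2) * (2 * \<bar>R\<bar> + 1) < t * norm x"
    using t by (intro mult_strict_mono) auto
  then show ?thesis using t by simp
qed

lemma integral_Euler_derivative:
  fixes H G :: "'a::euclidean_space \<Rightarrow> real"
  assumes contH: "continuous_on UNIV H" and contG: "continuous_on UNIV G"
    and suppH: "\<And>x. norm x > R \<Longrightarrow> H x = 0" and suppG: "\<And>x. norm x > R \<Longrightarrow> G x = 0"
    and der: "\<And>x. ((\<lambda>t. H (t *\<^sub>R x)) has_real_derivative G x) (at 1)"
  shows "(\<integral>x. G x \<partial>lborel) = - real DIM('a) * (\<integral>x. H x \<partial>lborel)"
proof -
  define bx where "bx = cbox (- ((2 * \<bar>R\<bar> + 1) *\<^sub>R (\<Sum>Basis::'a))) ((2 * \<bar>R\<bar> + 1) *\<^sub>R \<Sum>Basis)"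
  define U where "U = {1/2<..<(2::real)}"
  have U: "open U" "convex U" "1 \<in> U" by (auto simp: U_def)
  define IH where "IH = (\<integral>x. H x \<partial>lborel)"
  have outside_bx: "norm (t *\<^sub>R x) > R" if "t \<in> U" "x \<notin> bx" for t x
    using norm_scaleR_gt_outside_cube[of t x R] that by (simp add: U_def bx_def)
  have intH: "integrable lborel H"
    using integrable_continuous_bounded_support[OF contH suppH] .
  have scaled: "integral bx (\<lambda>x. H (t *\<^sub>R x)) = IH / t ^ DIM('a)" if t: "t \<in> U" for t
  proof -
    have "t > 0" using t by (simp add: U_def)
    then show ?thesis
      using lborel_integral_scaleR[OF _ intH] suppH outside_bx[OF t]
      by (subst integral_eq_lborel_integral_of_support) (auto simp: IH_def)
  qed
  have derH: "((\<lambda>t. H (t *\<^sub>R x)) has_real_derivative G (t *\<^sub>R x) / t) (at t within U)"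
    if "t \<in> U" for t x
  proof -
    have t: "t > 0" using that by (simp add: U_def)
    have "((\<lambda>s. H (s *\<^sub>R (t *\<^sub>R x))) \<circ> (\<lambda>s. s / t) has_real_derivative G (t *\<^sub>R x) * (1/t)) (at t)"
      by (rule DERIV_chain) (use der[of "t *\<^sub>R x"] t in \<open>auto intro!: derivative_eq_intros\<close>)
    moreover have "(\<lambda>s. H (s *\<^sub>R (t *\<^sub>R x))) \<circ> (\<lambda>s. s / t) = (\<lambda>s. H (s *\<^sub>R x))"
      using t by (auto simp: fun_eq_iff)
    ultimately show ?thesis by (auto intro: has_field_derivative_at_within)
  qed
  have "continuous_on (U \<times> bx) (\<lambda>(t, x). G (t *\<^sub>R x) / t)"
    by (auto simp: case_prod_unfold U_def intro!: continuous_intros continuous_on_compose2[OF contG])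
  then have "((\<lambda>t. integral bx (\<lambda>x. H (t *\<^sub>R x))) has_real_derivative integral bx (\<lambda>x. G (1 *\<^sub>R x) / 1))
          (at 1 within U)"
    unfolding bx_def
    by (intro leibniz_rule_field_derivative[where fx="\<lambda>t x. G (t *\<^sub>R x) / t"])
      (auto intro!: U derH integrable_continuous continuous_intros continuous_on_compose2[OF contH])
  then have "((\<lambda>t. integral bx (\<lambda>x. H (t *\<^sub>R x))) has_real_derivative integral bx G) (at 1)"
    using at_within_open[OF U(3,1)] by simp
  moreover have "((\<lambda>t. integral bx (\<lambda>x. H (t *\<^sub>R x))) has_real_derivative - real DIM('a) * IH) (at 1)"
    by (rule has_field_derivative_transform_within_open[OF _ U(1,3)])
      (auto simp: scaled intro!: derivative_eq_intros)
  ultimately have "integral bx G = - real DIM('a) * IH"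
    by (rule DERIV_unique)
  moreover have "integral bx G = (\<integral>x. G x \<partial>lborel)"
    using integrable_continuous_bounded_support[OF contG suppG] suppG outside_bx[OF U(3)]
    by (intro integral_eq_lborel_integral_of_support) auto
  ultimately show ?thesis by (simp add: IH_def)
qed

lemma continuous_integrable_annulus_support:
  fixes h :: "'a::euclidean_space \<Rightarrow> real"
  assumes "\<And>x. x \<noteq> 0 \<Longrightarrow> isCont h x" "r > 0"
    and "\<And>x. norm x < r \<Longrightarrow> h x = 0" "\<And>x. norm x > R \<Longrightarrow> h x = 0"
  shows "continuous_on UNIV h" "integrable lborel h"
proof -
  show "continuous_on UNIV h"
    by (rule continuous_on_vanishing_near_0[OF assms(1-3)])
  then show "integrable lborel h"
    using integrable_continuous_bounded_support assms(4) by blast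
qed

section \<open>Homogeneous quasi-norms and the Euler derivative\<close>

lemma homogeneous_quasi_normD:
  assumes "homogeneous_quasi_norm q"
  shows "continuous_on UNIV q" "\<And>x. q x \<ge> 0" "\<And>x l. l > 0 \<Longrightarrow> q (l *\<^sub>R x) = l * q x"
    "\<And>x. q x = 0 \<longleftrightarrow> x = 0"
  using assms unfolding homogeneous_quasi_norm_def by auto

lemma homogeneous_quasi_norm_pos:
  assumes "homogeneous_quasi_norm q" "x \<noteq> 0"
  shows "q x > 0"
  using homogeneous_quasi_normD[OF assms(1)] assms(2) by (metis less_eq_real_def)

lemma homogeneous_quasi_norm_isCont:
  assumes "homogeneous_quasi_norm q"
  shows "isCont q x"
  using homogeneous_quasi_normD(1)[OF assms] by (simp add: continuous_on_eq_continuous_at)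

lemma power2_divide_powr:
  fixes a r b :: real
  shows "(a / r powr (b + 1))\<^sup>2 = a\<^sup>2 * r powr (- (2 * b + 2))"
proof -
  have "(r powr (b + 1))\<^sup>2 = r powr (2 * b + 2)"
    by (simp add: power2_eq_square powr_add[symmetric])
  then have "(a / r powr (b + 1))\<^sup>2 = a\<^sup>2 / r powr (2 * b + 2)"
    by (simp only: power_divide)
  also have "\<dots> = a\<^sup>2 * r powr (- (2 * b + 2))"
    unfolding powr_minus_divide by simp
  finally show ?thesis .
qed

definition Euler_deriv :: "('a::real_normed_vector \<Rightarrow> real) \<Rightarrow> 'a \<Rightarrow> real" where
  "Euler_deriv f x = frechet_derivative f (at x) x"

lemma smooth_funD:
  assumes "smooth_fun f"
  shows "f differentiable (at x)" "smooth_fun (\<lambda>x. frechet_derivative f (at x) v)"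
  using assms by (auto elim: smooth_fun.cases)

lemma smooth_fun_continuous:
  assumes "smooth_fun f" shows "continuous_on UNIV f"
  using smooth_funD(1)[OF assms]
  by (intro differentiable_imp_continuous_on) (auto simp: differentiable_on_def intro: differentiable_at_withinI)

lemma has_real_derivative_along_ray:
  assumes "\<And>x. f differentiable (at x)"
  shows "((\<lambda>t. f (t *\<^sub>R y)) has_real_derivative frechet_derivative f (at (t *\<^sub>R y)) y) (at t)"
proof -
  let ?D = "frechet_derivative f (at (t *\<^sub>R y))"
  have "(f has_derivative ?D) (at (t *\<^sub>R y))"
    unfolding frechet_derivative_works[symmetric] by (rule assms)
  moreover have "((\<lambda>s. s *\<^sub>R y) has_derivative (\<lambda>s. s *\<^sub>R y)) (at t)"
    by (auto intro!: derivative_eq_intros)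
  ultimately have "((\<lambda>s. f (s *\<^sub>R y)) has_derivative (\<lambda>s. ?D (s *\<^sub>R y))) (at t)"
    using has_derivative_compose by blast
  moreover have "(\<lambda>s. ?D (s *\<^sub>R y)) = (*) (?D y)"
    using linear_frechet_derivative[OF assms] by (simp add: linear_scale fun_eq_iff)
  ultimately show ?thesis by (simp add: has_field_derivative_def)
qed

lemma Euler_deriv_along_ray:
  assumes "\<And>x. f differentiable (at x)"
  shows "((\<lambda>t. f (t *\<^sub>R x)) has_real_derivative Euler_deriv f x) (at 1)"
  using has_real_derivative_along_ray[OF assms, of x 1] by (simp add: Euler_deriv_def)

lemma Euler_deriv_eqI:
  assumes "\<And>x. f differentiable (at x)" "((\<lambda>t. f (t *\<^sub>R x)) has_real_derivative d) (at 1)"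
  shows "Euler_deriv f x = d"
  using DERIV_unique[OF Euler_deriv_along_ray[OF assms(1)] assms(2)] .

lemma Euler_deriv_eq_0:
  assumes "\<And>x. f differentiable (at x)" "open U" "x \<in> U" "\<And>y. y \<in> U \<Longrightarrow> f y = 0"
  shows "Euler_deriv f x = 0"
proof -
  have "(f has_derivative (\<lambda>_. 0)) (at x)"
    by (rule has_derivative_transform_within_open[OF has_derivative_const assms(2,3)])
      (use assms(4) in auto)
  then have "frechet_derivative f (at x) = (\<lambda>_. 0)"
    by (simp add: frechet_derivative_at[symmetric])
  then show ?thesis
    by (simp add: Euler_deriv_def)
qed

lemma continuous_on_Euler_deriv:
  fixes f :: "'a::euclidean_space \<Rightarrow> real"
  assumes "smooth_fun f"
  shows "continuous_on UNIV (Euler_deriv f)"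
proof -
  have lin: "linear (frechet_derivative f (at x))" for x
    using linear_frechet_derivative smooth_funD(1)[OF assms] by blast
  have "Euler_deriv f x = (\<Sum>b\<in>Basis. (x \<bullet> b) * frechet_derivative f (at x) b)" for x
  proof -
    have "Euler_deriv f x = frechet_derivative f (at x) (\<Sum>b\<in>Basis. (x \<bullet> b) *\<^sub>R b)"
      by (simp add: Euler_deriv_def euclidean_representation)
    then show ?thesis by (simp add: linear_sum[OF lin] linear_scale[OF lin])
  qed
  moreover have "continuous_on UNIV (\<lambda>x. \<Sum>b\<in>Basis. (x \<bullet> b) * frechet_derivative f (at x) b)"
    by (intro continuous_intros smooth_fun_continuous smooth_funD(2)[OF assms])
  ultimately show ?thesis by (simp add: fun_eq_iff)
qed

lemma radial_deriv_eq_Euler_deriv: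
  assumes hq: "homogeneous_quasi_norm q" and f: "\<And>x. f differentiable (at x)"
  shows "radial_deriv q f x = Euler_deriv f x / q x"
proof (cases "x = 0")
  case True
  then show ?thesis using homogeneous_quasi_normD(4)[OF hq] by (simp add: radial_deriv_def)
next
  case False
  define y where "y = x /\<^sub>R q x"
  have qx: "q x > 0" using homogeneous_quasi_norm_pos[OF hq False] .
  then have xy: "q x *\<^sub>R y = x" by (simp add: y_def)
  have "((\<lambda>r. f (r *\<^sub>R y)) has_real_derivative frechet_derivative f (at x) y) (at (q x))"
    using has_real_derivative_along_ray[OF f, of y "q x"] by (simp only: xy)
  then have "radial_deriv q f x = frechet_derivative f (at x) y"
    unfolding radial_deriv_def y_def[symmetric] by (rule DERIV_imp_deriv)
  also have "\<dots> = Euler_deriv f x / q x"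
    unfolding y_def Euler_deriv_def linear_scale[OF linear_frechet_derivative[OF f]]
    by (simp add: divide_inverse mult.commute)
  finally show ?thesis .
qed

lemma L2norm_radial_deriv:
  assumes "homogeneous_quasi_norm q" "\<And>x. f differentiable (at x)"
  shows "L2norm (\<lambda>x. radial_deriv q f x / q x powr \<alpha>)
           = sqrt (\<integral>x. (Euler_deriv f x)\<^sup>2 * q x powr (- (2 * \<alpha> + 2)) \<partial>lborel)"
proof -
  have ratio: "radial_deriv q f x / q x powr \<alpha> = Euler_deriv f x / q x powr (\<alpha> + 1)" for x
  proof (cases "q x = 0")
    case False
    then have "q x powr (\<alpha> + 1) = q x * q x powr \<alpha>"
      using homogeneous_quasi_normD(2)[OF assms(1), of x] by (simp add: powr_add)
    then show ?thesis by (simp add: radial_deriv_eq_Euler_deriv[OF assms])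
  qed (simp add: radial_deriv_eq_Euler_deriv[OF assms])
  show ?thesis
    unfolding L2norm_def by (simp only: ratio power2_divide_powr)
qed

lemma L2norm_divide_quasi_norm:
  "L2norm (\<lambda>x. f x / q x powr (\<alpha> + 1)) = sqrt (\<integral>x. (f x)\<^sup>2 * q x powr (- (2 * \<alpha> + 2)) \<partial>lborel)"
  by (simp only: L2norm_def power2_divide_powr)

section \<open>The Hardy inequality\<close>

lemma Cc_infty_punctured_vanishing:
  fixes f :: "'a::euclidean_space \<Rightarrow> real"
  assumes "f \<in> Cc_infty_punctured"
  obtains r R where "r > 0"
    "\<And>x. norm x < r \<or> norm x > R \<Longrightarrow> f x = 0 \<and> Euler_deriv f x = 0"
proof -
  define S where "S = closure {x. f x \<noteq> 0}"
  have sm: "smooth_fun f" and S: "compact S" "0 \<notin> S"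
    using assms by (auto simp: Cc_infty_punctured_def S_def)
  have f0: "f x = 0" if "x \<notin> S" for x
    using that closure_subset[of "{x. f x \<noteq> 0}"] unfolding S_def by auto
  obtain r where r: "r > 0" "ball 0 r \<subseteq> - S"
    using open_contains_ball[of "- S"] compact_imp_closed[OF S(1)] S(2) by auto
  obtain R where "\<And>x. x \<in> S \<Longrightarrow> norm x \<le> R"
    using compact_imp_bounded[OF S(1)] by (auto simp: bounded_iff)
  then have R: "S \<subseteq> cball 0 R" by auto
  have outside: "f y = 0" if "y \<in> ball 0 r \<union> - cball 0 R" for y
    using that r(2) R f0 by blast
  have "f x = 0 \<and> Euler_deriv f x = 0" if "x \<in> ball 0 r \<union> - cball 0 R" for x
    using that outside smooth_funD(1)[OF sm]
    by (intro conjI Euler_deriv_eq_0[of f "ball 0 r \<union> - cball 0 R"]) auto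
  then show ?thesis
    using that[OF r(1)] by (auto simp: not_le)
qed

lemma continuous_integrable_mult_quasi_norm_powr:
  fixes q \<phi> :: "'a::euclidean_space \<Rightarrow> real"
  assumes hq: "homogeneous_quasi_norm q" and \<phi>: "continuous_on UNIV \<phi>"
    and r: "r > 0" and vanish: "\<And>x. norm x < r \<or> norm x > R \<Longrightarrow> \<phi> x = 0"
  shows "continuous_on UNIV (\<lambda>x. \<phi> x * q x powr p)" "integrable lborel (\<lambda>x. \<phi> x * q x powr p)"
proof -
  have "isCont (\<lambda>x. \<phi> x * q x powr p) x" if "x \<noteq> 0" for x
    using \<phi> homogeneous_quasi_norm_isCont[OF hq, of x] homogeneous_quasi_norm_pos[OF hq that]
    by (intro continuous_intros) (auto simp: continuous_on_eq_continuous_at)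
  then show "continuous_on UNIV (\<lambda>x. \<phi> x * q x powr p)" "integrable lborel (\<lambda>x. \<phi> x * q x powr p)"
    using continuous_integrable_annulus_support[OF _ r, of "\<lambda>x. \<phi> x * q x powr p" R] vanish by auto
qed

lemma Euler_deriv_weighted_square:
  fixes q f :: "'a::euclidean_space \<Rightarrow> real"
  assumes hq: "homogeneous_quasi_norm q" and dif: "\<And>x. f differentiable (at x)" and f0: "f 0 = 0"
  shows "((\<lambda>t. (f (t *\<^sub>R x))\<^sup>2 * q (t *\<^sub>R x) powr p) has_real_derivative
           (2 * (f x * Euler_deriv f x) + p * (f x)\<^sup>2) * q x powr p) (at 1)"
proof (cases "x = 0")
  case False
  have "((\<lambda>t. (f (t *\<^sub>R x))\<^sup>2 * (t powr p * q x powr p)) has_real_derivative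
          (2 * f (1 *\<^sub>R x) * Euler_deriv f x) * (1 powr p * q x powr p)
            + (f (1 *\<^sub>R x))\<^sup>2 * ((p * 1 powr (p - 1)) * q x powr p)) (at 1)"
    by (intro derivative_eq_intros has_real_derivative_powr) (auto intro: Euler_deriv_along_ray[OF dif])
  then have "((\<lambda>t. (f (t *\<^sub>R x))\<^sup>2 * (t powr p * q x powr p)) has_real_derivative
      (2 * (f x * Euler_deriv f x) + p * (f x)\<^sup>2) * q x powr p) (at 1)"
    by (simp add: algebra_simps)
  then show ?thesis
    by (rule has_field_derivative_transform_within_open[of _ _ _ "{0<..}"])
      (auto simp: homogeneous_quasi_normD(2,3)[OF hq] powr_mult)
qed (simp add: f0)

lemma weighted_Euler_identity:
  fixes f q :: "'a::euclidean_space \<Rightarrow> real" and p :: real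
  assumes hq: "homogeneous_quasi_norm q" and f: "f \<in> Cc_infty_punctured"
  shows "integrable lborel (\<lambda>x. (f x)\<^sup>2 * q x powr p)"
    and "integrable lborel (\<lambda>x. (Euler_deriv f x)\<^sup>2 * q x powr p)"
    and "integrable lborel (\<lambda>x. f x * Euler_deriv f x * q x powr p)"
    and "2 * (\<integral>x. f x * Euler_deriv f x * q x powr p \<partial>lborel)
           = - (real DIM('a) + p) * (\<integral>x. (f x)\<^sup>2 * q x powr p \<partial>lborel)"
proof -
  obtain r R where r: "r > 0"
    and vanish: "\<And>x. norm x < r \<or> norm x > R \<Longrightarrow> f x = 0 \<and> Euler_deriv f x = 0"
    using Cc_infty_punctured_vanishing[OF f] by blast
  have sm: "smooth_fun f" using f by (simp add: Cc_infty_punctured_def)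
  have cont: "continuous_on UNIV f" "continuous_on UNIV (Euler_deriv f)"
    using smooth_fun_continuous[OF sm] continuous_on_Euler_deriv[OF sm] .
  have weighted: "continuous_on UNIV (\<lambda>x. \<phi> x * q x powr p) \<and> integrable lborel (\<lambda>x. \<phi> x * q x powr p)"
    if \<phi>: "continuous_on UNIV \<phi>" and zero: "\<And>x. f x = 0 \<Longrightarrow> Euler_deriv f x = 0 \<Longrightarrow> \<phi> x = 0" for \<phi>
  proof -
    have "\<phi> x = 0" if "norm x < r \<or> norm x > R" for x
      using vanish[OF that] zero by simp
    then show ?thesis
      using continuous_integrable_mult_quasi_norm_powr[OF hq \<phi> r] by blast
  qed
  define H where "H x = (f x)\<^sup>2 * q x powr p" for x
  define G where "G x = (2 * (f x * Euler_deriv f x) + p * (f x)\<^sup>2) * q x powr p" for x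
  have H: "continuous_on UNIV H" "integrable lborel H"
    and G: "continuous_on UNIV G" "integrable lborel G"
  proof -
    have "continuous_on UNIV (\<lambda>x. (f x)\<^sup>2)"
      "continuous_on UNIV (\<lambda>x. 2 * (f x * Euler_deriv f x) + p * (f x)\<^sup>2)"
      using cont by (auto intro!: continuous_intros)
    from this[THEN weighted] show "continuous_on UNIV H" "integrable lborel H"
      "continuous_on UNIV G" "integrable lborel G"
      unfolding H_def G_def by auto
  qed
  show intA: "integrable lborel (\<lambda>x. (f x)\<^sup>2 * q x powr p)"
    and "integrable lborel (\<lambda>x. (Euler_deriv f x)\<^sup>2 * q x powr p)"
    and intM: "integrable lborel (\<lambda>x. f x * Euler_deriv f x * q x powr p)"
    using cont by (auto intro!: weighted[THEN conjunct2] continuous_intros)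
  have "((\<lambda>t. H (t *\<^sub>R x)) has_real_derivative G x) (at 1)" for x
    unfolding H_def G_def
    using Euler_deriv_weighted_square[OF hq smooth_funD(1)[OF sm]] vanish[of 0] r by simp
  then have "(\<integral>x. G x \<partial>lborel) = - real DIM('a) * (\<integral>x. H x \<partial>lborel)"
    using vanish by (intro integral_Euler_derivative[OF H(1) G(1), of R]) (auto simp: H_def G_def)
  moreover have "G = (\<lambda>x. 2 * (f x * Euler_deriv f x * q x powr p) + p * H x)"
    by (auto simp: G_def H_def fun_eq_iff algebra_simps)
  then have "(\<integral>x. G x \<partial>lborel)
      = 2 * (\<integral>x. f x * Euler_deriv f x * q x powr p \<partial>lborel) + p * (\<integral>x. H x \<partial>lborel)"
    using H(2) intM by simp
  ultimately show "2 * (\<integral>x. f x * Euler_deriv f x * q x powr p \<partial>lborel)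
      = - (real DIM('a) + p) * (\<integral>x. (f x)\<^sup>2 * q x powr p \<partial>lborel)"
    by (simp add: H_def algebra_simps)
qed

theorem Hardy_inequality_quasi_norm:
  fixes q f :: "'a::euclidean_space \<Rightarrow> real" and \<alpha> :: real
  assumes hq: "homogeneous_quasi_norm q" and f: "f \<in> Cc_infty_punctured"
  shows "\<bar>real DIM('a) - 2 - 2 * \<alpha>\<bar> / 2 * L2norm (\<lambda>x. f x / q x powr (\<alpha> + 1))
           \<le> L2norm (\<lambda>x. radial_deriv q f x / q x powr \<alpha>)"
proof -
  define p where "p = - (2 * \<alpha> + 2)"
  define c where "c = (real DIM('a) - 2 - 2 * \<alpha>) / 2"
  define A where "A = (\<integral>x. (f x)\<^sup>2 * q x powr p \<partial>lborel)"
  define B where "B = (\<integral>x. (Euler_deriv f x)\<^sup>2 * q x powr p \<partial>lborel)"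
  define M where "M = (\<integral>x. f x * Euler_deriv f x * q x powr p \<partial>lborel)"
  note identity = weighted_Euler_identity[OF hq f, of p]
  have "real DIM('a) + p = 2 * c" by (simp add: p_def c_def)
  then have "M = - c * A"
    using identity(4) by (simp add: M_def A_def)
  moreover have "M\<^sup>2 \<le> A * B"
    using weighted_integral_Cauchy_Schwarz[OF identity(1-3)] by (simp add: A_def B_def M_def)
  moreover have "A \<ge> 0" "B \<ge> 0"
    unfolding A_def B_def by (auto intro!: integral_nonneg_AE)
  ultimately have "c\<^sup>2 * A \<le> B"
    by (cases "A = 0") (auto simp: power2_eq_square mult_le_cancel_left_pos)
  then have "\<bar>c\<bar> * sqrt A \<le> sqrt B"
    using real_sqrt_le_mono by (fastforce simp: real_sqrt_mult)
  moreover have "\<bar>real DIM('a) - 2 - 2 * \<alpha>\<bar> / 2 = \<bar>c\<bar>" by (simp add: c_def)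
  moreover have "\<And>x. f differentiable (at x)"
    using f smooth_funD(1) by (auto simp: Cc_infty_punctured_def)
  ultimately show ?thesis
    by (simp add: L2norm_divide_quasi_norm L2norm_radial_deriv[OF hq] A_def B_def p_def)
qed

section \<open>Smooth functions of one real variable\<close>

coinductive smooth_on :: "real set \<Rightarrow> (real \<Rightarrow> real) \<Rightarrow> bool" for U where
  "(\<And>x. x \<in> U \<Longrightarrow> (f has_real_derivative f' x) (at x)) \<Longrightarrow> smooth_on U f' \<Longrightarrow> smooth_on U f"

lemma smooth_on_coinduct:
  assumes "X f"
    and "\<And>g. X g \<Longrightarrow> \<exists>g'. (\<forall>x\<in>U. (g has_real_derivative g' x) (at x)) \<and> (X g' \<or> smooth_on U g')"
  shows "smooth_on U f"
  using assms(1)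
proof (rule smooth_on.coinduct[where X=X])
  fix g assume "X g"
  then show "\<exists>f f'. g = f \<and> (\<forall>x. x \<in> U \<longrightarrow> (f has_real_derivative f' x) (at x)) \<and> (X f' \<or> smooth_on U f')"
    using assms(2) by blast
qed

definition smooth_deriv :: "real set \<Rightarrow> (real \<Rightarrow> real) \<Rightarrow> real \<Rightarrow> real" where
  "smooth_deriv U f = (SOME f'. (\<forall>x\<in>U. (f has_real_derivative f' x) (at x)) \<and> smooth_on U f')"

lemma smooth_derivD:
  assumes "smooth_on U f"
  shows "\<And>x. x \<in> U \<Longrightarrow> (f has_real_derivative smooth_deriv U f x) (at x)"
    and "smooth_on U (smooth_deriv U f)"
proof -
  have "\<exists>f'. (\<forall>x\<in>U. (f has_real_derivative f' x) (at x)) \<and> smooth_on U f'"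
    using assms by (rule smooth_on.cases) blast
  then have "(\<forall>x\<in>U. (f has_real_derivative smooth_deriv U f x) (at x)) \<and> smooth_on U (smooth_deriv U f)"
    unfolding smooth_deriv_def by (rule someI_ex)
  then show "\<And>x. x \<in> U \<Longrightarrow> (f has_real_derivative smooth_deriv U f x) (at x)"
    and "smooth_on U (smooth_deriv U f)" by auto
qed

lemma smooth_on_cong:
  assumes "smooth_on U f" "open U" "\<And>x. x \<in> U \<Longrightarrow> f x = g x"
  shows "smooth_on U g"
proof (rule smooth_on_coinduct[where X="\<lambda>g. \<exists>f. smooth_on U f \<and> (\<forall>x\<in>U. f x = g x)"])
  show "\<exists>f. smooth_on U f \<and> (\<forall>x\<in>U. f x = g x)" using assms by auto
next
  fix g assume "\<exists>f. smooth_on U f \<and> (\<forall>x\<in>U. f x = g x)"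
  then obtain f where f: "smooth_on U f" "\<forall>x\<in>U. f x = g x" by auto
  have "(g has_real_derivative smooth_deriv U f x) (at x)" if "x \<in> U" for x
    by (rule has_field_derivative_transform_within_open[OF smooth_derivD(1)[OF f(1) that] assms(2) that])
      (use f in auto)
  then show "\<exists>g'. (\<forall>x\<in>U. (g has_real_derivative g' x) (at x)) \<and>
      ((\<exists>f. smooth_on U f \<and> (\<forall>x\<in>U. f x = g' x)) \<or> smooth_on U g')"
    using smooth_derivD(2)[OF f(1)] by blast
qed

lemma smooth_on_const: "smooth_on U (\<lambda>_. c)"
  by (rule smooth_on_coinduct[where X="\<lambda>g. \<exists>c. g = (\<lambda>_. c)"]) (auto intro!: exI[of _ "\<lambda>_. 0"])

lemma smooth_on_id: "smooth_on U (\<lambda>x. x)"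
proof (rule smooth_on.intros[OF _ smooth_on_const])
  show "((\<lambda>x. x) has_real_derivative 1) (at x)" for x by simp
qed

text \<open>Products are handled through finite sums of products, a class closed under differentiation.\<close>

definition sum_products :: "((real \<Rightarrow> real) \<times> (real \<Rightarrow> real)) list \<Rightarrow> real \<Rightarrow> real" where
  "sum_products L x = (\<Sum>(a, b)\<leftarrow>L. a x * b x)"

definition sum_products_deriv ::
    "real set \<Rightarrow> ((real \<Rightarrow> real) \<times> (real \<Rightarrow> real)) list \<Rightarrow> ((real \<Rightarrow> real) \<times> (real \<Rightarrow> real)) list" where
  "sum_products_deriv U L = concat (map (\<lambda>(a, b). [(smooth_deriv U a, b), (a, smooth_deriv U b)]) L)"

lemma has_real_derivative_sum_products:
  assumes "\<And>a b. (a, b) \<in> set L \<Longrightarrow> smooth_on U a \<and> smooth_on U b" "x \<in> U"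
  shows "(sum_products L has_real_derivative sum_products (sum_products_deriv U L) x) (at x)"
  using assms(1)
proof (induction L)
  case Nil
  then show ?case by (simp add: sum_products_def sum_products_deriv_def)
next
  case (Cons p L)
  obtain a b where p: "p = (a, b)" by (cases p)
  have ab: "smooth_on U a" "smooth_on U b" using Cons.prems p by auto
  have "((\<lambda>x. a x * b x) has_real_derivative smooth_deriv U a x * b x + a x * smooth_deriv U b x) (at x)"
    by (rule DERIV_mult[OF smooth_derivD(1)[OF ab(1) assms(2)] smooth_derivD(1)[OF ab(2) assms(2)],
          THEN DERIV_cong]) (simp add: algebra_simps)
  then have "((\<lambda>x. a x * b x + sum_products L x) has_real_derivative
      (smooth_deriv U a x * b x + a x * smooth_deriv U b x) + sum_products (sum_products_deriv U L) x) (at x)"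
    by (intro DERIV_add Cons.IH) (use Cons.prems in auto)
  then show ?case
    by (simp add: p sum_products_def sum_products_deriv_def add.assoc)
qed

lemma smooth_on_sum_products:
  assumes "\<And>a b. (a, b) \<in> set L \<Longrightarrow> smooth_on U a \<and> smooth_on U b"
  shows "smooth_on U (sum_products L)"
proof (rule smooth_on_coinduct[where
      X="\<lambda>g. \<exists>L. g = sum_products L \<and> (\<forall>a b. (a, b) \<in> set L \<longrightarrow> smooth_on U a \<and> smooth_on U b)"])
  fix g assume "\<exists>L. g = sum_products L \<and> (\<forall>a b. (a, b) \<in> set L \<longrightarrow> smooth_on U a \<and> smooth_on U b)"
  then obtain L where L: "g = sum_products L" "\<And>a b. (a, b) \<in> set L \<Longrightarrow> smooth_on U a \<and> smooth_on U b"
    by auto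
  have "\<And>a b. (a, b) \<in> set (sum_products_deriv U L) \<Longrightarrow> smooth_on U a \<and> smooth_on U b"
    using L(2) smooth_derivD(2) unfolding sum_products_deriv_def by fastforce
  then show "\<exists>g'. (\<forall>x\<in>U. (g has_real_derivative g' x) (at x)) \<and>
      ((\<exists>L. g' = sum_products L \<and> (\<forall>a b. (a, b) \<in> set L \<longrightarrow> smooth_on U a \<and> smooth_on U b)) \<or> smooth_on U g')"
    using has_real_derivative_sum_products[OF L(2)] L(1)
    by (intro exI[of _ "sum_products (sum_products_deriv U L)"]) auto
qed (use assms in auto)

lemma smooth_on_mult: "smooth_on U a \<Longrightarrow> smooth_on U b \<Longrightarrow> smooth_on U (\<lambda>x. a x * b x)"
  using smooth_on_sum_products[of "[(a, b)]" U] by (simp add: sum_products_def[abs_def])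

lemma smooth_on_add:
  assumes "smooth_on U a" "smooth_on U b"
  shows "smooth_on U (\<lambda>x. a x + b x)"
proof -
  have "smooth_on U (sum_products [(a, \<lambda>_. 1), (b, \<lambda>_. 1)])"
    using assms smooth_on_const by (intro smooth_on_sum_products) auto
  then show ?thesis by (simp add: sum_products_def[abs_def])
qed

lemma smooth_on_cmult: "smooth_on U a \<Longrightarrow> smooth_on U (\<lambda>x. c * a x)"
  using smooth_on_mult[OF smooth_on_const] by blast

text \<open>Likewise, the chain rule is handled through sums of products \<open>a (g x) * b x\<close>.\<close>

definition sum_products_comp ::
    "((real \<Rightarrow> real) \<times> (real \<Rightarrow> real)) list \<Rightarrow> (real \<Rightarrow> real) \<Rightarrow> real \<Rightarrow> real" where
  "sum_products_comp L g x = (\<Sum>(a, b)\<leftarrow>L. a (g x) * b x)"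

lemma smooth_on_compose:
  assumes \<phi>: "smooth_on V \<phi>" and g: "smooth_on U g" and gV: "\<And>x. x \<in> U \<Longrightarrow> g x \<in> V"
  shows "smooth_on U (\<lambda>x. \<phi> (g x))"
proof -
  let ?ok = "\<lambda>L. \<forall>a b. (a, b) \<in> set L \<longrightarrow> smooth_on V a \<and> smooth_on U b"
  have "smooth_on U (sum_products_comp [(\<phi>, \<lambda>_. 1)] g)"
  proof (rule smooth_on_coinduct[where X="\<lambda>h. \<exists>L. h = sum_products_comp L g \<and> ?ok L"])
    fix h assume "\<exists>L. h = sum_products_comp L g \<and> ?ok L"
    then obtain L where L: "h = sum_products_comp L g" "?ok L" by auto
    define L' where "L' = concat (map (\<lambda>(a, b).
        [(smooth_deriv V a, \<lambda>x. smooth_deriv U g x * b x), (a, smooth_deriv U b)]) L)"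
    have "?ok L'"
      using L(2) smooth_derivD(2) smooth_on_mult[OF smooth_derivD(2)[OF g]] unfolding L'_def by fastforce
    moreover have "(sum_products_comp L g has_real_derivative sum_products_comp L' g x) (at x)"
      if x: "x \<in> U" for x
      unfolding L'_def using L(2)
    proof (induction L)
      case Nil
      then show ?case by (simp add: sum_products_comp_def)
    next
      case (Cons p L)
      obtain a b where p: "p = (a, b)" by (cases p)
      have ab: "smooth_on V a" "smooth_on U b" using Cons.prems p by auto
      note derivs = smooth_derivD(1)[OF ab(1) gV[OF x]] smooth_derivD(1)[OF g x] smooth_derivD(1)[OF ab(2) x]
      have "((\<lambda>x. a (g x) * b x) has_real_derivative
          smooth_deriv V a (g x) * smooth_deriv U g x * b x + a (g x) * smooth_deriv U b x) (at x)"
        by (rule DERIV_mult[OF DERIV_chain2[OF derivs(1,2)] derivs(3), THEN DERIV_cong])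
          (simp add: algebra_simps)
      then have "((\<lambda>x. a (g x) * b x + sum_products_comp L g x) has_real_derivative
          (smooth_deriv V a (g x) * smooth_deriv U g x * b x + a (g x) * smooth_deriv U b x)
            + sum_products_comp (concat (map (\<lambda>(a, b). [(smooth_deriv V a, \<lambda>x. smooth_deriv U g x * b x),
                (a, smooth_deriv U b)]) L)) g x) (at x)"
        by (intro DERIV_add Cons.IH) (use Cons.prems in auto)
      then show ?case by (simp add: p sum_products_comp_def algebra_simps)
    qed
    ultimately show "\<exists>g'. (\<forall>x\<in>U. (h has_real_derivative g' x) (at x)) \<and>
        ((\<exists>L. g' = sum_products_comp L g \<and> ?ok L) \<or> smooth_on U g')"
      using L(1) by (intro exI[of _ "sum_products_comp L' g"]) auto
  qed (use \<phi> smooth_on_const in auto)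
  then show ?thesis by (simp add: sum_products_comp_def[abs_def])
qed

lemma smooth_on_powr: "smooth_on {0<..} (\<lambda>x. x powr a)"
proof (rule smooth_on_coinduct[where X="\<lambda>h. \<exists>c b. h = (\<lambda>x. c * x powr b)"])
  fix h assume "\<exists>c b. h = (\<lambda>x::real. c * x powr b)"
  then obtain c b where h: "h = (\<lambda>x::real. c * x powr b)" by auto
  have "\<forall>x\<in>{0<..}. (h has_real_derivative (c * b) * x powr (b - 1)) (at x)"
    unfolding h by (auto intro!: derivative_eq_intros)
  then show "\<exists>g'. (\<forall>x\<in>{0<..}. (h has_real_derivative g' x) (at x)) \<and>
      ((\<exists>c b. g' = (\<lambda>x. c * x powr b)) \<or> smooth_on {0<..} g')"
    by (intro exI[of _ "\<lambda>x. (c * b) * x powr (b - 1)"]) auto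
qed (rule exI[of _ 1], auto)

lemma smooth_on_ln: "smooth_on {0<..} ln"
proof (rule smooth_on.intros[OF _ smooth_on_powr[of "-1"]])
  show "\<And>x. x \<in> {0<..} \<Longrightarrow> (ln has_real_derivative x powr (-1)) (at x)"
    by (auto intro: DERIV_ln[THEN DERIV_cong] simp: powr_minus)
qed

section \<open>A smooth bump function\<close>

text \<open>The functions \<open>p(1/t) exp(-1/t)\<close> on \<open>t > 0\<close>, extended by \<open>0\<close>, with \<open>p\<close> a polynomial given by
  its list of (coefficient, degree) pairs. They are closed under differentiation, also at \<open>t = 0\<close>,
  which is what makes \<open>exp(-1/t)\<close> smooth.\<close>

definition exp_inv_poly :: "(real \<times> nat) list \<Rightarrow> real \<Rightarrow> real" where
  "exp_inv_poly L t = (if t > 0 then (\<Sum>(c, m)\<leftarrow>L. c * inverse t ^ m) * exp (- inverse t) else 0)"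

definition exp_inv_poly_deriv :: "(real \<times> nat) list \<Rightarrow> (real \<times> nat) list" where
  "exp_inv_poly_deriv L = concat (map (\<lambda>(c, m). [(c, m + 2), (- (c * real m), m + 1)]) L)"

lemma has_real_derivative_exp_inv_poly_pos:
  assumes "t > 0"
  shows "((\<lambda>t. (\<Sum>(c, m)\<leftarrow>L. c * inverse t ^ m) * exp (- inverse t)) has_real_derivative
           (\<Sum>(c, m)\<leftarrow>exp_inv_poly_deriv L. c * inverse t ^ m) * exp (- inverse t)) (at t)"
proof (induction L)
  case Nil
  then show ?case by (simp add: exp_inv_poly_deriv_def)
next
  case (Cons p L)
  obtain c m where p: "p = (c, m)" by (cases p)
  have "((\<lambda>t. c * inverse t ^ m * exp (- inverse t)) has_real_derivative
        c * (real m * inverse t ^ (m - 1) * (- (inverse t * inverse t))) * exp (- inverse t)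
          + c * inverse t ^ m * (exp (- inverse t) * (inverse t * inverse t))) (at t)"
    using assms by (auto intro!: derivative_eq_intros simp: power2_eq_square)
  moreover have "c * (real m * inverse t ^ (m - 1) * (- (inverse t * inverse t))) * exp (- inverse t)
          + c * inverse t ^ m * (exp (- inverse t) * (inverse t * inverse t))
        = (c * inverse t ^ (m + 2) - c * real m * inverse t ^ (m + 1)) * exp (- inverse t)"
    by (cases m) (simp_all add: power2_eq_square algebra_simps)
  ultimately have "((\<lambda>t. c * inverse t ^ m * exp (- inverse t)) has_real_derivative
        (c * inverse t ^ (m + 2) - c * real m * inverse t ^ (m + 1)) * exp (- inverse t)) (at t)"
    by simp
  from DERIV_add[OF this Cons.IH] show ?case
    by (simp add: p exp_inv_poly_deriv_def algebra_simps sum_list_addf)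
qed

lemma tendsto_exp_inv_poly_divide_at_right_0:
  "((\<lambda>s. exp_inv_poly L s / s) \<longlongrightarrow> 0) (at_right 0)"
proof -
  have exp_lim: "((\<lambda>u::real. u ^ k * exp (- u)) \<longlongrightarrow> 0) at_top" for k
    using tendsto_power_div_exp_0[of k] by (simp add: exp_minus divide_inverse)
  have power_term: "((\<lambda>s::real. inverse s ^ k * exp (- inverse s)) \<longlongrightarrow> 0) (at_right 0)" for k
    using filterlim_compose[OF exp_lim filterlim_inverse_at_top_right] by (simp add: o_def)
  have "((\<lambda>s. \<Sum>(c, m)\<leftarrow>L. c * (inverse s ^ (m + 1) * exp (- inverse s))) \<longlongrightarrow> 0) (at_right (0::real))"
  proof (induction L)
    case (Cons p L)
    obtain c m where p: "p = (c, m)" by (cases p)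
    show ?case
      using tendsto_add[OF tendsto_mult[OF tendsto_const[of c] power_term[of "m + 1"]] Cons.IH] by (simp add: p)
  qed simp
  moreover have "(\<Sum>(c, m)\<leftarrow>L. c * (inverse s ^ (m + 1) * exp (- inverse s))) = exp_inv_poly L s / s"
    if "s > 0" for s
    using that by (induction L) (auto simp: exp_inv_poly_def divide_inverse algebra_simps)
  then have "\<forall>\<^sub>F s in at_right 0. (\<Sum>(c, m)\<leftarrow>L. c * (inverse s ^ (m + 1) * exp (- inverse s)))
      = exp_inv_poly L s / s"
    by (auto simp: eventually_at_right_field intro!: exI[of _ 1])
  ultimately show ?thesis by (rule Lim_transform_eventually)
qed

lemma has_real_derivative_exp_inv_poly:
  "(exp_inv_poly L has_real_derivative exp_inv_poly (exp_inv_poly_deriv L) t) (at t)"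
proof -
  consider "t > 0" | "t < 0" | "t = 0" by linarith
  then show ?thesis
  proof cases
    case 1
    have "(exp_inv_poly L has_real_derivative
        (\<Sum>(c, m)\<leftarrow>exp_inv_poly_deriv L. c * inverse t ^ m) * exp (- inverse t)) (at t)"
      by (rule has_field_derivative_transform_within_open[OF has_real_derivative_exp_inv_poly_pos[OF 1],
            of "{0<..}"]) (use 1 in \<open>auto simp: exp_inv_poly_def\<close>)
    then show ?thesis using 1 by (simp add: exp_inv_poly_def)
  next
    case 2
    have "((\<lambda>_. 0) has_real_derivative 0) (at t)" by simp
    then show ?thesis
      by (rule has_field_derivative_transform_within_open[of _ _ _ "{..<0}", THEN DERIV_cong])
        (use 2 in \<open>auto simp: exp_inv_poly_def\<close>)
  next
    case 3
    have "((\<lambda>s. (exp_inv_poly L s - exp_inv_poly L 0) / (s - 0)) \<longlongrightarrow> 0) (at 0)"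
    proof (rule filterlim_split_at)
      show "((\<lambda>s. (exp_inv_poly L s - exp_inv_poly L 0) / (s - 0)) \<longlongrightarrow> 0) (at_left 0)"
        by (rule tendsto_eventually)
          (auto simp: exp_inv_poly_def eventually_at_left_field intro!: exI[of _ "-1"])
      show "((\<lambda>s. (exp_inv_poly L s - exp_inv_poly L 0) / (s - 0)) \<longlongrightarrow> 0) (at_right 0)"
        using tendsto_exp_inv_poly_divide_at_right_0 by (simp add: exp_inv_poly_def)
    qed
    then show ?thesis
      using 3 by (simp add: has_field_derivative_iff exp_inv_poly_def)
  qed
qed

lemma smooth_on_exp_inv_poly: "smooth_on U (exp_inv_poly L)"
proof (rule smooth_on_coinduct[where X="\<lambda>g. \<exists>L. g = exp_inv_poly L"])
  fix g assume "\<exists>L. g = exp_inv_poly L"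
  then obtain L where "g = exp_inv_poly L" by auto
  then show "\<exists>g'. (\<forall>x\<in>U. (g has_real_derivative g' x) (at x)) \<and> ((\<exists>L. g' = exp_inv_poly L) \<or> smooth_on U g')"
    by (intro exI[of _ "exp_inv_poly (exp_inv_poly_deriv L)"]) (auto intro: has_real_derivative_exp_inv_poly)
qed auto

definition bump :: "real \<Rightarrow> real" where
  "bump s = exp_inv_poly [(1, 0)] (1 + s) * exp_inv_poly [(1, 0)] (1 - s)"

lemma exp_inv_poly_1: "exp_inv_poly [(1, 0)] t = (if t > 0 then exp (- inverse t) else 0)"
  by (simp add: exp_inv_poly_def)

lemma smooth_on_bump: "smooth_on UNIV bump"
proof -
  have affine: "smooth_on UNIV (\<lambda>s::real. 1 + c * s)" for c
    by (intro smooth_on_add smooth_on_const smooth_on_cmult smooth_on_id)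
  have "smooth_on UNIV (\<lambda>s. exp_inv_poly [(1, 0)] (1 + 1 * s) * exp_inv_poly [(1, 0)] (1 + -1 * s))"
    by (intro smooth_on_mult smooth_on_compose[OF smooth_on_exp_inv_poly affine]) auto
  then show ?thesis by (simp add: bump_def[abs_def])
qed

lemma bump_eq_0: "\<bar>s\<bar> \<ge> 1 \<Longrightarrow> bump s = 0"
  by (auto simp: bump_def exp_inv_poly_1)

lemma bump_ge: 
  assumes "\<bar>s\<bar> \<le> 1/2"
  shows "bump s \<ge> exp (-4)"
proof -
  have "inverse (1 + s) \<le> 2" "inverse (1 - s) \<le> 2" "1 + s > 0" "1 - s > 0"
    using assms by (auto simp: field_simps abs_le_iff)
  then have "exp (-2) * exp (-2) \<le> exp (- inverse (1 + s)) * exp (- inverse (1 - s))"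
    by (intro mult_mono) auto
  moreover have "exp (-2) * exp (-2) = exp (-4::real)" by (simp flip: exp_add)
  ultimately show ?thesis
    using \<open>1 + s > 0\<close> \<open>1 - s > 0\<close> by (simp add: bump_def exp_inv_poly_1)
qed

definition bump_deriv :: "real \<Rightarrow> real" where
  "bump_deriv = smooth_deriv UNIV bump"

lemma has_real_derivative_bump: "(bump has_real_derivative bump_deriv s) (at s)"
  unfolding bump_deriv_def using smooth_derivD(1)[OF smooth_on_bump] by auto

lemma isCont_bump: "isCont bump s"
  using has_real_derivative_bump by (rule DERIV_isCont)

lemma isCont_bump_deriv: "isCont bump_deriv s"
  unfolding bump_deriv_def using smooth_derivD(1)[OF smooth_derivD(2)[OF smooth_on_bump]]
  by (auto intro: DERIV_isCont)

lemma bump_deriv_eq_0: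
  assumes "\<bar>s\<bar> > 1"
  shows "bump_deriv s = 0"
proof -
  have "open {s::real. 1 < \<bar>s\<bar>}" by (intro open_Collect_less continuous_intros)
  have "((\<lambda>_. 0) has_real_derivative 0) (at s)" by simp
  then have "(bump has_real_derivative 0) (at s)"
    by (rule has_field_derivative_transform_within_open[of _ _ _ "{s. \<bar>s\<bar> > 1}"])
      (use assms bump_eq_0 \<open>open {s::real. 1 < \<bar>s\<bar>}\<close> in auto)
  then show ?thesis using has_real_derivative_bump DERIV_unique by blast
qed

lemma bump_deriv_power2_le:
  obtains Q where "\<And>s. (bump_deriv s)\<^sup>2 \<le> Q * ((bump (s + 1/2))\<^sup>2 + (bump (s - 1/2))\<^sup>2)"
proof -
  have "compact (bump_deriv ` {-1..1})"
    by (rule compact_continuous_image) (auto intro: continuous_at_imp_continuous_on isCont_bump_deriv)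
  then obtain M where "\<forall>y \<in> bump_deriv ` {-1..1}. norm y \<le> M"
    using compact_imp_bounded bounded_iff by blast
  then have M: "\<bar>bump_deriv s\<bar> \<le> M" if "\<bar>s\<bar> \<le> 1" for s
    using that by (auto simp: abs_le_iff)
  define Q where "Q = M\<^sup>2 / (exp (-4))\<^sup>2"
  have "(bump_deriv s)\<^sup>2 \<le> Q * ((bump (s + 1/2))\<^sup>2 + (bump (s - 1/2))\<^sup>2)" for s
  proof (cases "\<bar>s\<bar> \<le> 1")
    case True
    then have "\<bar>s + 1/2\<bar> \<le> 1/2 \<or> \<bar>s - 1/2\<bar> \<le> 1/2" by linarith
    then consider "exp (-4) \<le> bump (s + 1/2)" | "exp (-4) \<le> bump (s - 1/2)"
      using bump_ge by blast
    then have "(exp (-4))\<^sup>2 \<le> (bump (s + 1/2))\<^sup>2 + (bump (s - 1/2))\<^sup>2"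
    proof cases
      case 1
      then have "(exp (-4))\<^sup>2 \<le> (bump (s + 1/2))\<^sup>2" by (rule power_mono) simp
      then show ?thesis using zero_le_power2[of "bump (s - 1/2)"] by linarith
    next
      case 2
      then have "(exp (-4))\<^sup>2 \<le> (bump (s - 1/2))\<^sup>2" by (rule power_mono) simp
      then show ?thesis using zero_le_power2[of "bump (s + 1/2)"] by linarith
    qed
    then have "Q * (exp (-4))\<^sup>2 \<le> Q * ((bump (s + 1/2))\<^sup>2 + (bump (s - 1/2))\<^sup>2)"
      by (rule mult_left_mono) (simp add: Q_def)
    moreover have "(bump_deriv s)\<^sup>2 \<le> Q * (exp (-4))\<^sup>2"
      using power_mono[OF M[OF True] abs_ge_zero, of 2] by (simp add: Q_def)
    ultimately show ?thesis by linarith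
  qed (simp add: bump_deriv_eq_0 Q_def)
  then show ?thesis by (rule that)
qed

lemma continuous_on_bump_rescaled:
  assumes "k > 0"
  shows "continuous_on UNIV (\<lambda>s. bump (s / k))" "continuous_on UNIV (\<lambda>s. bump_deriv (s / k) / k)"
proof -
  have "continuous_on UNIV bump" "continuous_on UNIV bump_deriv"
    using isCont_bump isCont_bump_deriv by (auto intro: continuous_at_imp_continuous_on)
  then show "continuous_on UNIV (\<lambda>s. bump (s / k))" "continuous_on UNIV (\<lambda>s. bump_deriv (s / k) / k)"
    using assms by (auto intro!: continuous_intros continuous_on_compose2[of UNIV bump]
        continuous_on_compose2[of UNIV bump_deriv])
qed

lemma bump_rescaled_eq_0:
  assumes "k > 0" "\<bar>s\<bar> \<ge> 2 * k"
  shows "bump (s / k) = 0" "bump_deriv (s / k) / k = 0"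
proof -
  have "\<bar>s / k\<bar> \<ge> 2" using assms by (simp add: abs_div le_divide_eq)
  then show "bump (s / k) = 0" "bump_deriv (s / k) / k = 0"
    by (simp_all add: bump_eq_0 bump_deriv_eq_0)
qed

section \<open>Smooth radial functions\<close>

lemma smooth_fun_coinduct:
  assumes "X f"
    and "\<And>g. X g \<Longrightarrow> (\<forall>x. g differentiable (at x)) \<and>
            (\<forall>v. X (\<lambda>x. frechet_derivative g (at x) v) \<or> smooth_fun (\<lambda>x. frechet_derivative g (at x) v))"
  shows "smooth_fun f"
  using assms(1)
proof (rule smooth_fun.coinduct[where X=X])
  fix g assume "X g"
  then show "\<exists>f. g = f \<and> (\<forall>x. f differentiable at x) \<and>
      (\<forall>v. X (\<lambda>x. frechet_derivative f (at x) v) \<or> smooth_fun (\<lambda>x. frechet_derivative f (at x) v))"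
    using assms(2) by blast
qed

text \<open>The derivatives of \<open>h (norm x)\<close> are finite sums of terms \<open>h\<^sub>i (norm x) * \<Prod>\<^sub>j (x \<bullet> u\<^sub>i\<^sub>j)\<close>
  with profiles \<open>h\<^sub>i\<close> that are smooth on \<open>{0<..}\<close> and vanish near \<open>0\<close>; these sums are represented
  by lists of pairs \<open>(h\<^sub>i, [u\<^sub>i\<^sub>1, \<dots>])\<close>.\<close>

definition prod_inner :: "'a::euclidean_space list \<Rightarrow> 'a \<Rightarrow> real" where
  "prod_inner us x = (\<Prod>u\<leftarrow>us. x \<bullet> u)"

fun prod_inner_deriv :: "'a::euclidean_space \<Rightarrow> 'a list \<Rightarrow> (real \<times> 'a list) list" where
  "prod_inner_deriv v [] = []"
| "prod_inner_deriv v (u # us) = (v \<bullet> u, us) # map (\<lambda>(c, ws). (c, u # ws)) (prod_inner_deriv v us)"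

lemma has_derivative_prod_inner:
  "(prod_inner us has_derivative (\<lambda>v. \<Sum>(c, ws)\<leftarrow>prod_inner_deriv v us. c * prod_inner ws x)) (at x)"
proof (induction us)
  case Nil
  then show ?case by (simp add: prod_inner_def)
next
  case (Cons u us)
  have "((\<lambda>x. (x \<bullet> u) * prod_inner us x) has_derivative
      (\<lambda>v. (x \<bullet> u) * (\<Sum>(c, ws)\<leftarrow>prod_inner_deriv v us. c * prod_inner ws x) + (v \<bullet> u) * prod_inner us x))
      (at x)"
    by (rule has_derivative_mult[OF _ Cons.IH]) (auto intro!: derivative_eq_intros)
  moreover have "(\<Sum>(c, ws)\<leftarrow>L. c * ((x \<bullet> u) * prod_inner ws x)) = (x \<bullet> u) * (\<Sum>(c, ws)\<leftarrow>L. c * prod_inner ws x)"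
    for L :: "(real \<times> 'a list) list"
    by (induction L) (auto simp: algebra_simps)
  ultimately show ?case
    by (simp add: prod_inner_def o_def case_prod_unfold algebra_simps)
qed

definition smooth_profile :: "(real \<Rightarrow> real) \<Rightarrow> bool" where
  "smooth_profile h \<longleftrightarrow> smooth_on {0<..} h \<and> (\<exists>a>0. \<forall>t. 0 \<le> t \<and> t < a \<longrightarrow> h t = 0)"

definition smooth_profiles :: "((real \<Rightarrow> real) \<times> 'a list) list \<Rightarrow> bool" where
  "smooth_profiles L \<longleftrightarrow> (\<forall>(h, us) \<in> set L. smooth_profile h)"

definition deriv_over_id :: "(real \<Rightarrow> real) \<Rightarrow> real \<Rightarrow> real" where
  "deriv_over_id h t = (if t > 0 then smooth_deriv {0<..} h t / t else 0)"

definition radial_sum :: "((real \<Rightarrow> real) \<times> 'a::euclidean_space list) list \<Rightarrow> 'a \<Rightarrow> real" where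
  "radial_sum L x = (\<Sum>(h, us)\<leftarrow>L. h (norm x) * prod_inner us x)"

definition radial_sum_deriv ::
    "'a::euclidean_space \<Rightarrow> ((real \<Rightarrow> real) \<times> 'a list) list \<Rightarrow> ((real \<Rightarrow> real) \<times> 'a list) list" where
  "radial_sum_deriv v L = concat (map (\<lambda>(h, us). (deriv_over_id h, v # us)
      # map (\<lambda>(c, ws). (\<lambda>t. c * h t, ws)) (prod_inner_deriv v us)) L)"

lemma smooth_profile_deriv_over_id:
  assumes "smooth_profile h"
  shows "smooth_profile (deriv_over_id h)"
proof -
  obtain a where a: "a > 0" "\<And>t. 0 \<le> t \<Longrightarrow> t < a \<Longrightarrow> h t = 0" and sh: "smooth_on {0<..} h"
    using assms unfolding smooth_profile_def by auto
  have "smooth_on {0<..} (\<lambda>t. smooth_deriv {0<..} h t * t powr (-1))"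
    by (intro smooth_on_mult smooth_derivD(2)[OF sh] smooth_on_powr)
  then have "smooth_on {0<..} (deriv_over_id h)"
    by (rule smooth_on_cong) (auto simp: deriv_over_id_def powr_minus divide_inverse)
  moreover have "deriv_over_id h t = 0" if "0 \<le> t" "t < a" for t
  proof (cases "t = 0")
    case False
    have "((\<lambda>_. 0) has_real_derivative 0) (at t)" by simp
    then have "(h has_real_derivative 0) (at t)"
      by (rule has_field_derivative_transform_within_open[of _ _ _ "{0<..<a}"]) (use that False a in auto)
    then show ?thesis
      using smooth_derivD(1)[OF sh, of t] that False DERIV_unique by (auto simp: deriv_over_id_def)
  qed (simp add: deriv_over_id_def)
  ultimately show ?thesis
    using a(1) unfolding smooth_profile_def by blast
qed

lemma has_derivative_radial_term:
  fixes x :: "'a::euclidean_space"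
  assumes "smooth_profile h"
  shows "((\<lambda>x. h (norm x) * prod_inner us x) has_derivative (\<lambda>v. radial_sum (radial_sum_deriv v [(h, us)]) x)) (at x)"
proof -
  obtain a where a: "a > 0" "\<And>t. 0 \<le> t \<Longrightarrow> t < a \<Longrightarrow> h t = 0" and sh: "smooth_on {0<..} h"
    using assms unfolding smooth_profile_def by auto
  have sum_scaled: "radial_sum (map (\<lambda>(c, ws). (\<lambda>t. c * h t, ws)) M) x
      = h (norm x) * (\<Sum>(c, ws)\<leftarrow>M. c * prod_inner ws x)" for M
    by (induction M) (auto simp: radial_sum_def algebra_simps)
  have D: "radial_sum (radial_sum_deriv v [(h, us)]) x
      = deriv_over_id h (norm x) * (x \<bullet> v) * prod_inner us x
          + h (norm x) * (\<Sum>(c, ws)\<leftarrow>prod_inner_deriv v us. c * prod_inner ws x)" for v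
    using sum_scaled by (simp add: radial_sum_deriv_def radial_sum_def prod_inner_def)
  show ?thesis
  proof (cases "x = 0")
    case True
    have "((\<lambda>x. h (norm x) * prod_inner us x) has_derivative (\<lambda>_. 0)) (at x)"
      by (rule has_derivative_transform_within_open[OF has_derivative_const, where s="ball 0 a"])
        (use True a in auto)
    moreover have "(\<lambda>v. radial_sum (radial_sum_deriv v [(h, us)]) x) = (\<lambda>_. 0)"
      unfolding D using True a(1) a(2)[of 0] by (simp add: deriv_over_id_def)
    ultimately show ?thesis by simp
  next
    case False
    then have "GDERIV (\<lambda>x. h (norm x)) x :> smooth_deriv {0<..} h (norm x) *\<^sub>R sgn x"
      by (intro GDERIV_DERIV_compose[OF GDERIV_norm smooth_derivD(1)[OF sh]]) auto
    then have "((\<lambda>x. h (norm x)) has_derivative (\<lambda>v. v \<bullet> (smooth_deriv {0<..} h (norm x) *\<^sub>R sgn x))) (at x)"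
      by (simp add: gderiv_def)
    from has_derivative_mult[OF this has_derivative_prod_inner]
    show ?thesis
      using False by (simp add: D deriv_over_id_def sgn_div_norm inner_commute divide_inverse algebra_simps)
  qed
qed

lemma has_derivative_radial_sum:
  assumes "smooth_profiles L"
  shows "(radial_sum L has_derivative (\<lambda>v. radial_sum (radial_sum_deriv v L) x)) (at x)"
  using assms
proof (induction L)
  case Nil
  then show ?case by (simp add: radial_sum_def radial_sum_deriv_def)
next
  case (Cons p L)
  obtain h us where p: "p = (h, us)" by (cases p)
  have "((\<lambda>x. h (norm x) * prod_inner us x + radial_sum L x) has_derivative
      (\<lambda>v. radial_sum (radial_sum_deriv v [(h, us)]) x + radial_sum (radial_sum_deriv v L) x)) (at x)"
    using Cons p by (intro has_derivative_add has_derivative_radial_term) (auto simp: smooth_profiles_def)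
  then show ?case
    by (simp add: p radial_sum_def radial_sum_deriv_def add.assoc)
qed

lemma smooth_profile_cmult: "smooth_profile h \<Longrightarrow> smooth_profile (\<lambda>t. c * h t)"
  unfolding smooth_profile_def using smooth_on_cmult by fastforce

lemma smooth_profiles_radial_sum_deriv:
  assumes "smooth_profiles L"
  shows "smooth_profiles (radial_sum_deriv v L)"
  using assms smooth_profile_deriv_over_id smooth_profile_cmult
  unfolding radial_sum_deriv_def smooth_profiles_def by fastforce

lemma smooth_fun_radial:
  assumes "smooth_profile h"
  shows "smooth_fun (\<lambda>x::'a::euclidean_space. h (norm x))"
proof -
  let ?X = "\<lambda>g. \<exists>L. g = radial_sum L \<and> smooth_profiles L"
  have "smooth_fun (radial_sum [(h, [] :: 'a list)])"
  proof (rule smooth_fun_coinduct[where X="?X"])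
    fix g :: "'a \<Rightarrow> real"
    assume "?X g"
    then obtain L where L: "g = radial_sum L" "smooth_profiles L"
      by auto
    note D = has_derivative_radial_sum[OF L(2)]
    have "(\<lambda>x. frechet_derivative g (at x) v) = radial_sum (radial_sum_deriv v L)" for v
      using frechet_derivative_at[OF D, symmetric] by (simp add: L(1) fun_eq_iff)
    then show "(\<forall>x. g differentiable (at x)) \<and>
        (\<forall>v. ?X (\<lambda>x. frechet_derivative g (at x) v) \<or> smooth_fun (\<lambda>x. frechet_derivative g (at x) v))"
      using D L(1) smooth_profiles_radial_sum_deriv[OF L(2)] by (auto simp: differentiable_def)
  qed (use assms in \<open>auto simp: smooth_profiles_def\<close>)
  then show ?thesis
    by (simp add: radial_sum_def[abs_def] prod_inner_def)
qed

section \<open>Optimality of the constant\<close>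

text \<open>Homogeneity of degree \<open>-n\<close> makes the measure \<open>K x dx\<close> invariant under dilations, so translating
  a profile in \<open>ln (norm x)\<close> does not change its weighted integral.\<close>

locale scale_invariant_weight =
  fixes K :: "'a::euclidean_space \<Rightarrow> real"
  assumes isCont_weight: "\<And>x. x \<noteq> 0 \<Longrightarrow> isCont K x"
    and weight_0: "K 0 = 0"
    and weight_pos: "\<And>x. x \<noteq> 0 \<Longrightarrow> K x > 0"
    and weight_scaleR: "\<And>l x. l > 0 \<Longrightarrow> K (l *\<^sub>R x) = K x / l ^ DIM('a)"
begin

lemma weight_nonneg: "K x \<ge> 0"
  using weight_pos[of x] weight_0 by (cases "x = 0") auto

lemma log_profile_integrable:
  assumes g: "continuous_on UNIV g" and supp: "\<And>s. \<bar>s\<bar> \<ge> L \<Longrightarrow> g s = 0"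
  shows "continuous_on UNIV (\<lambda>x. g (ln (norm x)) * K x)"
    and "integrable lborel (\<lambda>x. g (ln (norm x)) * K x)"
proof -
  have "isCont (\<lambda>x. g (ln (norm x)) * K x) x" if "x \<noteq> 0" for x
  proof -
    have "isCont (\<lambda>x. g (ln (norm x))) x"
      by (rule continuous_at_compose[of _ "\<lambda>x. ln (norm x)", unfolded o_def])
        (use that g in \<open>auto intro!: continuous_intros simp: continuous_on_eq_continuous_at\<close>)
    then show ?thesis using isCont_weight[OF that] by (intro continuous_intros)
  qed
  moreover have "g (ln (norm x)) * K x = 0" if "norm x < exp (- L)" for x
  proof (cases "x = 0")
    case False
    then have "ln (norm x) < - L"
      using that by (metis exp_gt_zero ln_exp ln_less_cancel_iff zero_less_norm_iff)
    then show ?thesis using supp[of "ln (norm x)"] by simp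
  qed (simp add: weight_0)
  moreover have "g (ln (norm x)) * K x = 0" if "norm x > exp L" for x
  proof -
    have "L < ln (norm x)" using that by (metis exp_gt_zero less_trans ln_exp ln_less_cancel_iff)
    then show ?thesis using supp[of "ln (norm x)"] by simp
  qed
  ultimately show "continuous_on UNIV (\<lambda>x. g (ln (norm x)) * K x)"
    and "integrable lborel (\<lambda>x. g (ln (norm x)) * K x)"
    using continuous_integrable_annulus_support[of "\<lambda>x. g (ln (norm x)) * K x" "exp (- L)" "exp L"]
    by auto
qed

lemma log_profile_integral_shift:
  assumes g: "continuous_on UNIV g" and supp: "\<And>s. \<bar>s\<bar> \<ge> L \<Longrightarrow> g s = 0"
  shows "(\<integral>x. g (ln (norm x) + t) * K x \<partial>lborel) = (\<integral>x. g (ln (norm x)) * K x \<partial>lborel)"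
proof -
  define l where "l = exp t"
  have l: "l > 0" by (simp add: l_def)
  define \<Phi> where "\<Phi> x = g (ln (norm x)) * K x" for x
  have "\<Phi> (l *\<^sub>R x) = g (ln (norm x) + t) * K x / l ^ DIM('a)" for x
  proof (cases "x = 0")
    case False
    then have "ln (norm (l *\<^sub>R x)) = ln (norm x) + t" using l by (simp add: l_def ln_mult)
    then show ?thesis using weight_scaleR[OF l, of x] by (simp add: \<Phi>_def)
  qed (simp add: \<Phi>_def weight_0)
  then have "(\<integral>x. g (ln (norm x) + t) * K x \<partial>lborel) / l ^ DIM('a) = (\<integral>x. \<Phi> x \<partial>lborel) / l ^ DIM('a)"
    using lborel_integral_scaleR(2)[OF l log_profile_integrable(2)[OF g supp]] by (simp add: \<Phi>_def)
  then show ?thesis using l by (simp add: \<Phi>_def)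
qed

lemma log_profile_integral_le_shifts:
  assumes g: "continuous_on UNIV g" "\<And>s. \<bar>s\<bar> \<ge> L \<Longrightarrow> g s = 0"
    and h: "continuous_on UNIV h" "\<And>s. \<bar>s\<bar> \<ge> L \<Longrightarrow> h s = 0"
    and le: "\<And>s. g s \<le> Q * (h (s + t) + h (s - t))"
  shows "(\<integral>x. g (ln (norm x)) * K x \<partial>lborel) \<le> 2 * Q * (\<integral>x. h (ln (norm x)) * K x \<partial>lborel)"
proof -
  have shifted: "continuous_on UNIV (\<lambda>s. h (s + c))" "\<And>s. \<bar>s\<bar> \<ge> L + \<bar>c\<bar> \<Longrightarrow> h (s + c) = 0" for c
    using h by (auto intro!: continuous_on_compose2[OF h(1)] continuous_intros)
  have int_shifted: "integrable lborel (\<lambda>x. h (ln (norm x) + c) * K x)" for c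
    by (rule log_profile_integrable(2)[of "\<lambda>s. h (s + c)" "L + \<bar>c\<bar>"]) (use shifted in auto)
  have "g (ln (norm x)) * K x \<le> Q * (h (ln (norm x) + t) * K x + h (ln (norm x) + - t) * K x)" for x
    using mult_right_mono[OF le[of "ln (norm x)"] weight_nonneg[of x]] by (simp add: algebra_simps)
  then have "(\<integral>x. g (ln (norm x)) * K x \<partial>lborel)
      \<le> (\<integral>x. Q * (h (ln (norm x) + t) * K x + h (ln (norm x) + - t) * K x) \<partial>lborel)"
    using int_shifted[of t] int_shifted[of "- t"]
    by (intro integral_mono log_profile_integrable(2)[OF g] integrable_mult_right integrable_add) auto
  also have "\<dots> = Q * ((\<integral>x. h (ln (norm x) + t) * K x \<partial>lborel) + (\<integral>x. h (ln (norm x) + - t) * K x \<partial>lborel))"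
    using int_shifted[of t] int_shifted[of "- t"] by simp
  also have "\<dots> = 2 * Q * (\<integral>x. h (ln (norm x)) * K x \<partial>lborel)"
    using log_profile_integral_shift[of h L t, OF h] log_profile_integral_shift[of h L "- t", OF h] by simp
  finally show ?thesis .
qed

lemma log_profile_integral_pos:
  assumes g: "continuous_on UNIV g" "\<And>s. \<bar>s\<bar> \<ge> L \<Longrightarrow> g s = 0"
    and nonneg: "\<And>s. g s \<ge> 0" and pos: "g 0 > 0"
  shows "(\<integral>x. g (ln (norm x)) * K x \<partial>lborel) > 0"
proof -
  obtain b :: 'a where b: "b \<in> Basis" using nonempty_Basis by blast
  then have "g (ln (norm b)) * K b > 0"
    using pos weight_pos[of b] by (auto simp: nonzero_Basis)
  then show ?thesis
    using nonneg weight_nonneg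
    by (intro integral_pos_continuous log_profile_integrable[OF g]) auto
qed

lemma log_profile_integral_bump_deriv_le:
  assumes k: "k > 0"
    and Q: "\<And>s. (bump_deriv s)\<^sup>2 \<le> Q * ((bump (s + 1/2))\<^sup>2 + (bump (s - 1/2))\<^sup>2)"
  shows "(\<integral>x. (bump_deriv (ln (norm x) / k) / k)\<^sup>2 * K x \<partial>lborel)
           \<le> 2 * (Q / k\<^sup>2) * (\<integral>x. (bump (ln (norm x) / k))\<^sup>2 * K x \<partial>lborel)"
proof -
  have "(bump_deriv (s / k) / k)\<^sup>2 \<le> Q / k\<^sup>2 * ((bump ((s + k / 2) / k))\<^sup>2 + (bump ((s - k / 2) / k))\<^sup>2)"
    for s
    using divide_right_mono[OF Q[of "s / k"], of "k\<^sup>2"] k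
    by (simp add: power_divide add_divide_distrib diff_divide_distrib)
  moreover have "continuous_on UNIV (\<lambda>s. (bump (s / k))\<^sup>2)"
    "continuous_on UNIV (\<lambda>s. (bump_deriv (s / k) / k)\<^sup>2)"
    using continuous_on_bump_rescaled[OF k] by (auto intro: continuous_on_power)
  ultimately show ?thesis
    by (intro log_profile_integral_le_shifts[of _ "2 * k"]) (auto simp: bump_rescaled_eq_0[OF k])
qed

end

text \<open>The extremal \<open>norm x powr (- \<beta>)\<close> of the weighted inequality, cut off by a bump in
  \<open>ln (norm x) / k\<close> to the shell \<open>exp (- k) \<le> norm x \<le> exp k\<close>; the cut-off costs only \<open>O(1/k)\<close>.\<close>

definition Hardy_test_profile :: "real \<Rightarrow> real \<Rightarrow> real \<Rightarrow> real" where
  "Hardy_test_profile \<beta> k t = t powr (- \<beta>) * bump (ln t / k)"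

lemma Hardy_test_profile_eq_0:
  assumes "k > 0" "t \<ge> 0" "t < exp (- k) \<or> t > exp k"
  shows "Hardy_test_profile \<beta> k t = 0"
proof (cases "t = 0")
  case False
  then have "ln t < - k \<or> ln t > k"
    using assms by (metis exp_gt_zero less_eq_real_def ln_exp ln_less_cancel_iff)
  then have "\<bar>ln t / k\<bar> \<ge> 1"
    using assms(1) by (auto simp: abs_div le_divide_eq)
  then show ?thesis by (simp add: Hardy_test_profile_def bump_eq_0)
qed (simp add: Hardy_test_profile_def)

lemma smooth_profile_Hardy_test:
  assumes "k > 0"
  shows "smooth_profile (Hardy_test_profile \<beta> k)"
proof -
  have "smooth_on {0<..} (\<lambda>t. (1 / k) * ln t)"
    by (rule smooth_on_cmult[OF smooth_on_ln])
  then have "smooth_on {0<..} (\<lambda>t. ln t / k)"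
    by (rule smooth_on_cong) auto
  then have "smooth_on {0<..} (\<lambda>t. t powr (- \<beta>) * bump (ln t / k))"
    by (intro smooth_on_mult smooth_on_powr smooth_on_compose[OF smooth_on_bump]) auto
  then show ?thesis
    unfolding smooth_profile_def Hardy_test_profile_def[abs_def]
    using Hardy_test_profile_eq_0[OF assms]
    by (intro conjI exI[of _ "exp (- k)"]) (auto simp: Hardy_test_profile_def)
qed

lemma Hardy_test_Cc_infty_punctured:
  assumes "k > 0"
  shows "(\<lambda>x::'a::euclidean_space. Hardy_test_profile \<beta> k (norm x)) \<in> Cc_infty_punctured"
proof -
  define T where "T = {x::'a. exp (- k) \<le> norm x \<and> norm x \<le> exp k}"
  have "x \<in> T" if "Hardy_test_profile \<beta> k (norm x) \<noteq> 0" for x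
  proof (rule ccontr)
    assume "x \<notin> T"
    then have "norm x < exp (- k) \<or> norm x > exp k" by (auto simp: T_def)
    then show False using Hardy_test_profile_eq_0[OF assms norm_ge_zero] that by blast
  qed
  moreover have "closed T" unfolding T_def by (intro closed_Collect_conj closed_Collect_le continuous_intros)
  ultimately have sub: "closure {x::'a. Hardy_test_profile \<beta> k (norm x) \<noteq> 0} \<subseteq> T"
    by (intro closure_minimal) auto
  have "bounded T"
    unfolding T_def by (rule bounded_subset[OF bounded_cball[of 0 "exp k"]]) auto
  then have "compact (closure {x::'a. Hardy_test_profile \<beta> k (norm x) \<noteq> 0})"
    using bounded_subset[OF _ order_trans[OF closure_subset sub]] by simp
  moreover have "(0::'a) \<notin> T" by (simp add: T_def)
  ultimately show ?thesis
    using sub smooth_fun_radial[OF smooth_profile_Hardy_test[OF assms]]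
    by (auto simp: Cc_infty_punctured_def)
qed

lemma Euler_deriv_Hardy_test:
  fixes x :: "'a::euclidean_space"
  assumes k: "k > 0"
  shows "Euler_deriv (\<lambda>x. Hardy_test_profile \<beta> k (norm x)) x
    = norm x powr (- \<beta>) * (bump_deriv (ln (norm x) / k) / k - \<beta> * bump (ln (norm x) / k))"
proof (rule Euler_deriv_eqI)
  show "(\<lambda>x. Hardy_test_profile \<beta> k (norm x)) differentiable (at y)" for y :: 'a
    using smooth_funD(1)[OF smooth_fun_radial[OF smooth_profile_Hardy_test[OF k]]] .
  show "((\<lambda>t. Hardy_test_profile \<beta> k (norm (t *\<^sub>R x))) has_real_derivative
      norm x powr (- \<beta>) * (bump_deriv (ln (norm x) / k) / k - \<beta> * bump (ln (norm x) / k))) (at 1)"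
  proof (cases "x = 0")
    case False
    define \<rho> where "\<rho> = norm x"
    have \<rho>: "\<rho> > 0" using False by (simp add: \<rho>_def)
    have e: "\<rho> powr (- \<beta> - 1) * \<rho> = \<rho> powr (- \<beta>)"
      using powr_mult_base[of \<rho> "- \<beta> - 1"] \<rho> by (simp add: mult.commute)
    have "((\<lambda>t. t * \<rho>) has_real_derivative \<rho>) (at 1)"
      by (auto intro!: derivative_eq_intros)
    from DERIV_chain2[OF has_real_derivative_powr[of _ "- \<beta>"] this]
    have "((\<lambda>t. (t * \<rho>) powr (- \<beta>)) has_real_derivative - \<beta> * \<rho> powr (- \<beta> - 1) * \<rho>) (at 1)"
      using \<rho> by simp
    then have "((\<lambda>t. (t * \<rho>) powr (- \<beta>)) has_real_derivative - \<beta> * \<rho> powr (- \<beta>)) (at 1)"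
      by (simp only: mult.assoc e)
    moreover have "((\<lambda>t. ln (t * \<rho>) / k) has_real_derivative 1 / k) (at 1)"
      using \<rho> k by (auto intro!: derivative_eq_intros)
    from DERIV_chain2[OF has_real_derivative_bump this]
    have "((\<lambda>t. bump (ln (t * \<rho>) / k)) has_real_derivative bump_deriv (ln \<rho> / k) * (1 / k)) (at 1)"
      by simp
    ultimately have "((\<lambda>t. (t * \<rho>) powr (- \<beta>) * bump (ln (t * \<rho>) / k)) has_real_derivative
        \<rho> powr (- \<beta>) * (bump_deriv (ln \<rho> / k) / k - \<beta> * bump (ln \<rho> / k))) (at 1)"
      by (rule DERIV_mult[THEN DERIV_cong]) (simp add: algebra_simps)
    then show ?thesis
      unfolding \<rho>_def
      by (rule has_field_derivative_transform_within_open[of _ _ _ "{0<..}"])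
        (auto simp: Hardy_test_profile_def)
  qed simp
qed

definition Hardy_weight :: "('a::euclidean_space \<Rightarrow> real) \<Rightarrow> real \<Rightarrow> 'a \<Rightarrow> real" where
  "Hardy_weight q \<alpha> x = norm x powr (2 * \<alpha> + 2 - real DIM('a)) * q x powr (- (2 * \<alpha> + 2))"

lemma scale_invariant_weight_Hardy_weight:
  assumes hq: "homogeneous_quasi_norm q"
  shows "scale_invariant_weight (Hardy_weight q \<alpha>)"
proof
  show "isCont (Hardy_weight q \<alpha>) x" if "x \<noteq> 0" for x
    unfolding Hardy_weight_def[abs_def]
    using that homogeneous_quasi_norm_isCont[OF hq] homogeneous_quasi_norm_pos[OF hq that]
    by (intro continuous_intros) auto
  show "Hardy_weight q \<alpha> x > 0" if "x \<noteq> 0" for x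
    using that homogeneous_quasi_norm_pos[OF hq that] by (simp add: Hardy_weight_def)
  show "Hardy_weight q \<alpha> 0 = 0"
    by (simp add: Hardy_weight_def)
  show "Hardy_weight q \<alpha> (l *\<^sub>R x) = Hardy_weight q \<alpha> x / l ^ DIM('a)" if l: "l > 0" for l x
  proof -
    have "Hardy_weight q \<alpha> (l *\<^sub>R x)
        = l powr (2 * \<alpha> + 2 - real DIM('a)) * l powr (- (2 * \<alpha> + 2)) * Hardy_weight q \<alpha> x"
      using l homogeneous_quasi_normD(2,3)[OF hq] by (simp add: Hardy_weight_def powr_mult)
    also have "l powr (2 * \<alpha> + 2 - real DIM('a)) * l powr (- (2 * \<alpha> + 2)) = 1 / l ^ DIM('a)"
      using l by (simp add: powr_add[symmetric] powr_minus_divide powr_realpow)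
    finally show ?thesis by simp
  qed
qed

lemma L2norm_Hardy_test:
  fixes q :: "'a::euclidean_space \<Rightarrow> real" and \<alpha> k :: real
  assumes hq: "homogeneous_quasi_norm q" and k: "k > 0"
  defines "\<beta> \<equiv> (real DIM('a) - 2 - 2 * \<alpha>) / 2"
  shows "L2norm (\<lambda>x. Hardy_test_profile \<beta> k (norm x) / q x powr (\<alpha> + 1))
      = sqrt (\<integral>x. (bump (ln (norm x) / k))\<^sup>2 * Hardy_weight q \<alpha> x \<partial>lborel)"
    and "L2norm (\<lambda>x. radial_deriv q (\<lambda>x. Hardy_test_profile \<beta> k (norm x)) x / q x powr \<alpha>)
      = sqrt (\<integral>x. (bump_deriv (ln (norm x) / k) / k - \<beta> * bump (ln (norm x) / k))\<^sup>2
                  * Hardy_weight q \<alpha> x \<partial>lborel)"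
proof -
  have weight: "(norm x powr (- \<beta>) * c)\<^sup>2 * q x powr (- (2 * \<alpha> + 2)) = c\<^sup>2 * Hardy_weight q \<alpha> x"
    for x :: 'a and c
  proof -
    have "(norm x powr (- \<beta>))\<^sup>2 = norm x powr (2 * \<alpha> + 2 - real DIM('a))"
      by (simp add: power2_eq_square powr_add[symmetric] \<beta>_def algebra_simps)
    then show ?thesis
      by (simp add: Hardy_weight_def power_mult_distrib)
  qed
  show "L2norm (\<lambda>x. Hardy_test_profile \<beta> k (norm x) / q x powr (\<alpha> + 1))
      = sqrt (\<integral>x. (bump (ln (norm x) / k))\<^sup>2 * Hardy_weight q \<alpha> x \<partial>lborel)"
    by (simp only: L2norm_divide_quasi_norm Hardy_test_profile_def weight)
  have "\<And>x::'a. (\<lambda>x. Hardy_test_profile \<beta> k (norm x)) differentiable (at x)"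
    by (rule smooth_funD(1)[OF smooth_fun_radial[OF smooth_profile_Hardy_test[OF k]]])
  then show "L2norm (\<lambda>x. radial_deriv q (\<lambda>x. Hardy_test_profile \<beta> k (norm x)) x / q x powr \<alpha>)
      = sqrt (\<integral>x. (bump_deriv (ln (norm x) / k) / k - \<beta> * bump (ln (norm x) / k))\<^sup>2
                  * Hardy_weight q \<alpha> x \<partial>lborel)"
    by (simp only: L2norm_radial_deriv[OF hq] Euler_deriv_Hardy_test[OF k] weight)
qed

lemma Hardy_test_bound:
  fixes q :: "'a::euclidean_space \<Rightarrow> real" and \<alpha> C k Q :: real
  assumes hq: "homogeneous_quasi_norm q"
    and hyp: "\<forall>f \<in> Cc_infty_punctured. C * L2norm (\<lambda>x. f x / q x powr (\<alpha> + 1))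
                 \<le> L2norm (\<lambda>x. radial_deriv q f x / q x powr \<alpha>)"
    and k: "k > 0"
    and Q: "\<And>s. (bump_deriv s)\<^sup>2 \<le> Q * ((bump (s + 1/2))\<^sup>2 + (bump (s - 1/2))\<^sup>2)"
  shows "C \<le> \<bar>(real DIM('a) - 2 - 2 * \<alpha>) / 2\<bar> + sqrt (2 * Q) / k"
proof -
  define \<beta> where "\<beta> = (real DIM('a) - 2 - 2 * \<alpha>) / 2"
  define W where "W = Hardy_weight q \<alpha>"
  interpret scale_invariant_weight W
    unfolding W_def by (rule scale_invariant_weight_Hardy_weight[OF hq])
  define a where "a s = bump (s / k)" for s
  define b where "b s = bump_deriv (s / k) / k" for s
  have cont: "continuous_on UNIV a" "continuous_on UNIV b"
    using continuous_on_bump_rescaled[OF k] by (simp_all add: a_def[abs_def] b_def[abs_def])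
  have supp: "a s = 0" "b s = 0" if "\<bar>s\<bar> \<ge> 2 * k" for s
    using bump_rescaled_eq_0[OF k that] by (simp_all add: a_def b_def)
  note integrable = log_profile_integrable(2)[of _ "2 * k"]
  define A where "A = (\<integral>x. (a (ln (norm x)))\<^sup>2 * W x \<partial>lborel)"
  define E where "E = (\<integral>x. (b (ln (norm x)))\<^sup>2 * W x \<partial>lborel)"
  have "C * L2norm (\<lambda>x. Hardy_test_profile \<beta> k (norm x) / q x powr (\<alpha> + 1))
      \<le> L2norm (\<lambda>x. radial_deriv q (\<lambda>x. Hardy_test_profile \<beta> k (norm x)) x / q x powr \<alpha>)"
    by (rule bspec[OF hyp Hardy_test_Cc_infty_punctured[OF k]])
  moreover have "(\<lambda>x. (b (ln (norm x)) + - \<beta> * a (ln (norm x)))\<^sup>2 * W x)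
      = (\<lambda>x. (bump_deriv (ln (norm x) / k) / k - \<beta> * bump (ln (norm x) / k))\<^sup>2 * Hardy_weight q \<alpha> x)"
    by (simp add: a_def b_def W_def)
  ultimately have "C * sqrt A \<le> sqrt (\<integral>x. (b (ln (norm x)) + - \<beta> * a (ln (norm x)))\<^sup>2 * W x \<partial>lborel)"
    using L2norm_Hardy_test[OF hq k, of \<alpha>] by (simp add: A_def W_def a_def \<beta>_def)
  also have "\<dots> \<le> sqrt E + sqrt (\<integral>x. (- \<beta> * a (ln (norm x)))\<^sup>2 * W x \<partial>lborel)"
    unfolding E_def using cont supp weight_nonneg
    by (intro weighted_L2_triangle integrable[of "\<lambda>s. (b s)\<^sup>2"] integrable[of "\<lambda>s. (- \<beta> * a s)\<^sup>2"]
        integrable[of "\<lambda>s. b s * (- \<beta> * a s)"]) (auto intro!: continuous_intros)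
  also have "sqrt (\<integral>x. (- \<beta> * a (ln (norm x)))\<^sup>2 * W x \<partial>lborel) = \<bar>\<beta>\<bar> * sqrt A"
    by (simp add: A_def power_mult_distrib mult.assoc real_sqrt_mult)
  also have "sqrt E \<le> sqrt (2 * Q) / k * sqrt A"
  proof -
    have "sqrt E \<le> sqrt (2 * (Q / k\<^sup>2) * A)"
      using log_profile_integral_bump_deriv_le[OF k Q]
      by (intro real_sqrt_le_mono) (simp add: E_def A_def a_def b_def)
    also have "\<dots> = sqrt (2 * Q) / k * sqrt A"
      using k by (simp add: real_sqrt_mult real_sqrt_divide)
    finally show ?thesis .
  qed
  finally have "C * sqrt A \<le> (\<bar>\<beta>\<bar> + sqrt (2 * Q) / k) * sqrt A"
    by (simp add: algebra_simps)
  moreover have "A > 0"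
    unfolding A_def using cont supp bump_ge[of 0]
    by (intro log_profile_integral_pos[of _ "2 * k"]) (auto intro!: continuous_intros simp: a_def)
  ultimately show ?thesis
    by (simp add: \<beta>_def)
qed

lemma Hardy_constant_optimal:
  fixes q :: "'a::euclidean_space \<Rightarrow> real" and \<alpha> C :: real
  assumes hq: "homogeneous_quasi_norm q"
    and hyp: "\<forall>f \<in> Cc_infty_punctured. C * L2norm (\<lambda>x. f x / q x powr (\<alpha> + 1))
                 \<le> L2norm (\<lambda>x. radial_deriv q f x / q x powr \<alpha>)"
  shows "C \<le> \<bar>real DIM('a) - 2 - 2 * \<alpha>\<bar> / 2"
proof -
  obtain Q where Q: "\<And>s. (bump_deriv s)\<^sup>2 \<le> Q * ((bump (s + 1/2))\<^sup>2 + (bump (s - 1/2))\<^sup>2)"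
    using bump_deriv_power2_le by blast
  define c where "c = \<bar>real DIM('a) - 2 - 2 * \<alpha>\<bar> / 2"
  have "(\<lambda>k. c + sqrt (2 * Q) / real k) \<longlonglongrightarrow> c"
    using tendsto_add[OF tendsto_const tendsto_divide_0[OF tendsto_const filterlim_real_sequentially
          [THEN filterlim_at_top_imp_at_infinity]]] by simp
  moreover have "C \<le> c + sqrt (2 * Q) / real k" if "k \<ge> 1" for k :: nat
    using Hardy_test_bound[OF hq hyp _ Q, of "real k"] that by (simp add: c_def)
  ultimately have "C \<le> c"
    by (intro LIMSEQ_le_const[of _ c]) auto
  then show ?thesis by (simp add: c_def)
qed

theorem mainTheorem9:
  fixes q :: "real ^ 'n \<Rightarrow> real" and \<alpha> :: real
  assumes "CARD('n) \<ge> 3"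
    and "homogeneous_quasi_norm q"
  shows "(\<forall>f \<in> Cc_infty_punctured.
            \<bar>real CARD('n) - 2 - 2 * \<alpha>\<bar> / 2 * L2norm (\<lambda>x. f x / q x powr (\<alpha> + 1))
              \<le> L2norm (\<lambda>x. radial_deriv q f x / q x powr \<alpha>))
     \<and> (\<alpha> \<noteq> (real CARD('n) - 2) / 2 \<longrightarrow>
         (\<forall>C. (\<forall>f \<in> Cc_infty_punctured.
                  C * L2norm (\<lambda>x. f x / q x powr (\<alpha> + 1))
                    \<le> L2norm (\<lambda>x. radial_deriv q f x / q x powr \<alpha>))
              \<longrightarrow> C \<le> \<bar>real CARD('n) - 2 - 2 * \<alpha>\<bar> / 2))"
  using Hardy_inequality_quasi_norm[OF assms(2)] Hardy_constant_optimal[OF assms(2)] by simp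

end
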